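(* Let $\gamma$ follow the MFTR distribution with parameters $K>0$, $\Delta\in[0,1)$, $m>0$, $\mu>0$ and mean $\overline{\gamma}>0$. Then the ergodic capacity $\overline{C}=\int_0^\infty\log_2(1+x)f_\gamma(x)\,dx$ equals $$\overline{C}=\sum_{i=0}^\infty w_i\frac{(\lambda_i/\nu_i)^{\lambda_i}}{\Gamma(\lambda_i)\ln 2}\sum_{k=1}^\infty\frac1k\Gamma(k+\lambda_i)\,\mathbf{U}\!\left(k+\lambda_i,1+\lambda_i,\frac{\lambda_i}{\nu_i}\right),$$ where $\lambda_i=\mu+i$, $\nu_i=\frac{\overline{\gamma}(\mu+i)}{\mu(K+1)}$, $\mathbf{U}$ is the confluent hypergeometric Kummer function of the second kind, and $$w_i=\frac{\Gamma(m+i)(\mu K)^i m^m}{\Gamma(m)\Gamma(i+1)}\cdot\frac{(1-\Delta)^i}{\sqrt{\pi}\,(\mu K(1-\Delta)+m)^{m+i}}\sum_{q=0}^{i}\binom{i}{q}\frac{\Gamma(q+\frac12)}{\Gamma(q+1)}\left(\frac{2\Delta}{1-\Delta}\right)^q{}_2F_1\!\left(m+i,q+\tfrac12;q+1;\frac{-2\mu K\Delta}{\mu K(1-\Delta)+m}\right).$$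
   Context: MFTR (multi-cluster fluctuating two-ray) distribution. Fix parameters $K>0$, $\Delta\in[0,1]$, $m>0$, $\mu>0$, $\overline{\gamma}>0$. Physical model (for positive integer $\mu$): let $W=\left|\sqrt{\zeta}\,(V_1e^{j\phi_1}+V_2e^{j\phi_2})+X_1+jY_1\right|^2+\sum_{i=2}^{\mu}\left|\sqrt{\zeta}\,U_ie^{j\varphi_i}+X_i+jY_i\right|^2$, where $V_1,V_2,U_2,\dots,U_\mu\ge 0$ are constants, $\phi_1,\phi_2,\varphi_2,\dots,\varphi_\mu$ are i.i.d. uniform on $[0,2\pi)$, $X_i,Y_i$ ($i=1,\dots,\mu$) are i.i.d. $\mathcal{N}(0,\sigma^2)$, and $\zeta$ is Gamma distributed with density $m^m x^{m-1}e^{-mx}/\Gamma(m)$ on $x>0$ (unit mean), all mutually independent; $K=\frac{V_1^2+V_2^2+\sum_{i=2}^\mu U_i^2}{2\sigma^2\mu}$, $\Delta=\frac{2V_1V_2}{V_1^2+V_2^2+\sum_{i=2}^\mu U_i^2}$, and the SNR is $\gamma=(E_s/N_0)W$ with constant $E_s/N_0>0$, so that $\overline{\gamma}=\mathbb{E}\{\gamma\}=(E_s/N_0)2\sigma^2\mu(1+K)$. General definition (any real $\mu>0$; for integer $\mu$ it yields the same law as the physical model): $\gamma$ has the MFTR distribution with parameters $(K,\Delta,m,\mu,\overline{\gamma})$ if, with $\Theta$ uniform on $[0,\pi]$ and conditionally on $\Theta=\theta$, $\gamma$ has the $\kappa$-$\mu$ shadowed distribution with parameters $\kappa_\theta=K(1+\Delta\cos\theta)$,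 $\mu$, $m$ and mean $\overline{\gamma}_\theta=\overline{\gamma}(1+\kappa_\theta)/(1+K)$. Here the $\kappa$-$\mu$ shadowed distribution with parameters $\kappa\ge0,\mu>0,m>0$ and mean $\bar g>0$ is the law on $(0,\infty)$ with MGF $\mathbb{E}\{e^{s\gamma}\}=\left(1-\frac{\bar g s}{\mu(1+\kappa)}\right)^{m-\mu}\left(1-\frac{(\mu\kappa+m)\bar g s}{m\mu(1+\kappa)}\right)^{-m}$, $s\le0$. $f_\gamma$ is the PDF of $\gamma$; ${}_2F_1$ is the Gauss hypergeometric function; $\mathbf{U}(a,b,z)=\frac{1}{\Gamma(a)}\int_0^\infty e^{-zt}t^{a-1}(1+t)^{b-a-1}dt$ for $a,z>0$. *)

theory Defs
  imports "HOL-Probability.Probability"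
begin

text \<open>MGF of the kappa-mu shadowed distribution (parameters kappa, mu, m, mean gb), for s \<le> 0.\<close>
definition kms_mgf :: "real \<Rightarrow> real \<Rightarrow> real \<Rightarrow> real \<Rightarrow> real \<Rightarrow> real" where
  "kms_mgf \<kappa> \<mu> m gb s =
     (1 - gb * s / (\<mu> * (1 + \<kappa>))) powr (m - \<mu>) *
     (1 - (\<mu> * \<kappa> + m) * gb * s / (m * \<mu> * (1 + \<kappa>))) powr (- m)"

definition is_kms_law :: "real \<Rightarrow> real \<Rightarrow> real \<Rightarrow> real \<Rightarrow> real measure \<Rightarrow> bool" where
  "is_kms_law \<kappa> \<mu> m gb N \<longleftrightarrow>
     prob_space N \<and> sets N = sets borel \<and> (AE x in N. 0 < x) \<and>
     (\<forall>s\<le>0. (\<integral>x. exp (s * x) \<partial>N) = kms_mgf \<kappa> \<mu> m gb s)"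

definition is_mftr_law :: "real \<Rightarrow> real \<Rightarrow> real \<Rightarrow> real \<Rightarrow> real \<Rightarrow> real measure \<Rightarrow> bool" where
  "is_mftr_law K \<Delta> m \<mu> gb M \<longleftrightarrow>
     prob_space M \<and> sets M = sets borel \<and>
     (\<exists>N :: real \<Rightarrow> real measure.
        (\<forall>\<theta>\<in>{0..pi}. is_kms_law (K * (1 + \<Delta> * cos \<theta>)) \<mu> m
                          (gb * (1 + K * (1 + \<Delta> * cos \<theta>)) / (1 + K)) (N \<theta>)) \<and>
        (\<forall>A\<in>sets borel. measure M A = (LINT \<theta>:{0..pi}|lborel. measure (N \<theta>) A) / pi))"

definition is_mftr_pdf :: "real \<Rightarrow> real \<Rightarrow> real \<Rightarrow> real \<Rightarrow> real \<Rightarrow> (real \<Rightarrow> real) \<Rightarrow> bool" where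
  "is_mftr_pdf K \<Delta> m \<mu> gb f \<longleftrightarrow>
     f \<in> borel_measurable lborel \<and> (\<forall>x. 0 \<le> f x) \<and>
     is_mftr_law K \<Delta> m \<mu> gb (density lborel (\<lambda>x. ennreal (f x)))"

text \<open>Gauss hypergeometric function 2F1(a,b;c;z), via Euler's integral representation
  (the principal branch; valid for c > b > 0 and real z < 1, which covers all uses here).\<close>
definition hyp2F1 :: "real \<Rightarrow> real \<Rightarrow> real \<Rightarrow> real \<Rightarrow> real" where
  "hyp2F1 a b c z = Gamma c / (Gamma b * Gamma (c - b)) *
     (LINT t:{0<..<1}|lborel. t powr (b - 1) * (1 - t) powr (c - b - 1) * (1 - z * t) powr (- a))"

text \<open>Kummer (Tricomi) confluent hypergeometric function of the second kind, for a, z > 0.\<close>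
definition kummerU :: "real \<Rightarrow> real \<Rightarrow> real \<Rightarrow> real" where
  "kummerU a b z = (LINT t:{0<..}|lborel. exp (- z * t) * t powr (a - 1) * (1 + t) powr (b - a - 1))
                   / Gamma a"

definition mftr_w :: "real \<Rightarrow> real \<Rightarrow> real \<Rightarrow> real \<Rightarrow> nat \<Rightarrow> real" where
  "mftr_w K \<Delta> m \<mu> i =
     Gamma (m + real i) * (\<mu> * K) ^ i * m powr m / (Gamma m * Gamma (real i + 1)) *
     ((1 - \<Delta>) ^ i / (sqrt pi * (\<mu> * K * (1 - \<Delta>) + m) powr (m + real i))) *
     (\<Sum>q = 0..i. real (i choose q) * Gamma (real q + 1/2) / Gamma (real q + 1) *
        (2 * \<Delta> / (1 - \<Delta>)) ^ q *
        hyp2F1 (m + real i) (real q + 1/2) (real q + 1)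
               (- 2 * \<mu> * K * \<Delta> / (\<mu> * K * (1 - \<Delta>) + m)))"

definition mftr_lambda :: "real \<Rightarrow> nat \<Rightarrow> real" where
  "mftr_lambda \<mu> i = \<mu> + real i"

definition mftr_nu :: "real \<Rightarrow> real \<Rightarrow> real \<Rightarrow> nat \<Rightarrow> real" where
  "mftr_nu K \<mu> gb i = gb * (\<mu> + real i) / (\<mu> * (K + 1))"

end

theory Submission
  imports Defs
begin

text \<open>
  Frullani's integral \<open>ln (1 + x) = \<integral>\<^sub>0\<^sup>\<infinity> exp (-s) (1 - exp (-s x)) / s ds\<close> and Tonelli turn
  \<open>E ln (1 + \<gamma>)\<close> into the same integral of \<open>1 - \<phi> (-s)\<close>, where \<open>\<phi>\<close> is the MGF of \<open>\<gamma>\<close>.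
  Given \<open>\<Theta> = \<theta>\<close>, the \<open>\<kappa>\<close>-\<open>\<mu>\<close> shadowed MGF is a negative-binomial mixture
  \<open>\<Sum>\<^sub>i p\<^sub>i (\<kappa>\<^sub>\<theta>) (1 + a s) powr (-(\<mu> + i))\<close> of Gamma Laplace transforms whose scale
  \<open>a = gb / (\<mu> (1 + K))\<close> does not depend on \<open>\<theta>\<close>. So averaging over \<open>\<Theta>\<close> only acts on the
  weights, and after \<open>t = (1 + cos \<theta>) / 2\<close> and a binomial expansion the averaged weights are
  Euler integrals for \<open>\<^sub>2F\<^sub>1\<close>, i.e. the \<open>w\<^sub>i\<close>. What remains is the log-moment of a Gamma law,
  which \<open>ln (1 + t) = \<Sum>\<^sub>k (t / (1 + t))\<^sup>k / k\<close> expands into Kummer \<open>U\<close> functions. All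
  interchanges of sums and integrals are done for nonnegative integrands in \<open>ennreal\<close>;
  finiteness comes from \<open>1 - \<phi>\<^sub>\<theta> (-s) \<le> gb\<^sub>\<theta> s\<close>.
\<close>

definition ln1p_laplace :: "(real \<Rightarrow> real) \<Rightarrow> ennreal" where
  "ln1p_laplace L = (\<integral>\<^sup>+s. ennreal (indicator {0<..} s * exp (- s) * (1 - L s) / s) \<partial>lborel)"

lemma nn_integral_gamma_kernel:
  fixes lam c :: real
  assumes "lam > 0" "c > 0"
  shows "(\<integral>\<^sup>+t. ennreal (indicator {0<..} t * t powr (lam - 1) * exp (- c * t)) \<partial>lborel)
         = ennreal (Gamma lam / c powr lam)"
proof -
  let ?I = "\<integral>\<^sup>+t. ennreal (indicator {0<..} t * t powr (lam - 1) * exp (- c * t)) \<partial>lborel"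
  have "ennreal (Gamma lam) = (\<integral>\<^sup>+t. ennreal (indicator {0..} t * t powr (lam - 1) / exp t) \<partial>lborel)"
    using Gamma_conv_nn_integral_real[OF assms(1)] .
  also have "\<dots> = \<bar>c\<bar> * (\<integral>\<^sup>+t. ennreal (indicator {0..} (0 + c * t) * (0 + c * t) powr (lam - 1)
                                                / exp (0 + c * t)) \<partial>lborel)"
    by (rule nn_integral_real_affine) (use assms in auto)
  also have "\<dots> = ennreal c * (\<integral>\<^sup>+t. ennreal (c powr (lam - 1)) *
                     ennreal (indicator {0<..} t * t powr (lam - 1) * exp (- c * t)) \<partial>lborel)"
  proof -
    have "ennreal (indicator {0..} (0 + c * t) * (0 + c * t) powr (lam - 1) / exp (0 + c * t))
       = ennreal (c powr (lam - 1)) * ennreal (indicator {0<..} t * t powr (lam - 1) * exp (- c * t))" for t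
      using assms
      by (cases "t > 0")
         (auto simp: ennreal_mult'[symmetric] powr_mult exp_minus field_simps indicator_def
                     zero_le_mult_iff zero_le_divide_iff)
    then show ?thesis using assms by simp
  qed
  also have "\<dots> = ennreal c * ennreal (c powr (lam - 1)) * ?I"
    by (subst nn_integral_cmult) (auto simp: mult.assoc)
  finally have "ennreal (Gamma lam) = ennreal (c powr lam) * ?I"
    using assms by (simp add: ennreal_mult'[symmetric] powr_diff field_simps)
  then have "ennreal (1 / c powr lam) * ennreal (Gamma lam) = (ennreal (1 / c powr lam) * ennreal (c powr lam)) * ?I"
    by (simp add: mult.assoc)
  also have "ennreal (1 / c powr lam) * ennreal (c powr lam) = 1"
    using assms by (simp add: ennreal_mult'[symmetric])
  finally show ?thesis
    using assms by (simp add: ennreal_mult'[symmetric] field_simps)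
qed

lemma nn_integral_exp_affine_segment:
  fixes s x :: real
  assumes "s > 0" "x \<ge> 0"
  shows "(\<integral>\<^sup>+u. ennreal (exp (- s * (1 + u))) * indicator {0..x} u \<partial>lborel)
        = ennreal (exp (- s) * (1 - exp (- s * x)) / s)"
proof -
  have "((\<lambda>u. exp (- s * (1 + u))) has_integral (- exp (- s * (1 + x)) / s - - exp (- s * (1 + 0)) / s)) {0..x}"
    using assms
    by (intro fundamental_theorem_of_calculus)
       (auto intro!: derivative_eq_intros simp: has_real_derivative_iff_has_vector_derivative[symmetric]
                     has_field_derivative_at_within field_simps)
  then have "((\<lambda>u. exp (- s * (1 + u))) has_integral (exp (- s) * (1 - exp (- s * x)) / s)) {0..x}"
    using assms by (simp add: field_simps exp_add[symmetric] exp_diff)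
  from nn_integral_has_integral_lebesgue'[OF _ this] show ?thesis by simp
qed

lemma nn_integral_inverse_one_plus_segment:
  fixes x :: real
  assumes "x \<ge> 0"
  shows "(\<integral>\<^sup>+u. ennreal (1 / (1 + u)) * indicator {0..x} u \<partial>lborel) = ennreal (ln (1 + x))"
proof -
  have "((\<lambda>u. 1 / (1 + u)) has_integral (ln (1 + x) - ln (1 + 0))) {0..x}"
    using assms
    by (intro fundamental_theorem_of_calculus)
       (auto intro!: derivative_eq_intros simp: has_real_derivative_iff_has_vector_derivative[symmetric]
                     has_field_derivative_at_within)
  from nn_integral_has_integral_lebesgue'[OF _ this] show ?thesis by simp
qed

text \<open>Integrate \<open>exp (- s (1 + u))\<close> over \<open>s > 0\<close>, \<open>0 \<le> u \<le> x\<close> in both orders.\<close>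
lemma ln1p_laplace_exp:
  fixes x :: real
  assumes "x \<ge> 0"
  shows "ln1p_laplace (\<lambda>s. exp (- s * x)) = ennreal (ln (1 + x))"
proof -
  have "ln1p_laplace (\<lambda>s. exp (- s * x))
     = (\<integral>\<^sup>+s. \<integral>\<^sup>+u. ennreal (indicator {0<..} s * exp (- s * (1 + u))) * indicator {0..x} u \<partial>lborel \<partial>lborel)"
    unfolding ln1p_laplace_def
  proof (intro nn_integral_cong)
    fix s :: real
    show "ennreal (indicator {0<..} s * exp (- s) * (1 - exp (- s * x)) / s)
        = (\<integral>\<^sup>+u. ennreal (indicator {0<..} s * exp (- s * (1 + u))) * indicator {0..x} u \<partial>lborel)"
      using nn_integral_exp_affine_segment[of s x] assms by (cases "s > 0") (auto simp: indicator_def)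
  qed
  also have "\<dots> = (\<integral>\<^sup>+u. \<integral>\<^sup>+s. ennreal (indicator {0<..} s * exp (- s * (1 + u))) * indicator {0..x} u \<partial>lborel \<partial>lborel)"
    by (rule lborel_pair.Fubini') measurable
  also have "\<dots> = (\<integral>\<^sup>+u. ennreal (1 / (1 + u)) * indicator {0..x} u \<partial>lborel)"
  proof (intro nn_integral_cong)
    fix u :: real
    show "(\<integral>\<^sup>+s. ennreal (indicator {0<..} s * exp (- s * (1 + u))) * indicator {0..x} u \<partial>lborel)
        = ennreal (1 / (1 + u)) * indicator {0..x} u"
    proof (cases "u \<in> {0..x}")
      case True
      have "(\<integral>\<^sup>+s. ennreal (indicator {0<..} s * exp (- s * (1 + u))) \<partial>lborel)
          = (\<integral>\<^sup>+s. ennreal (indicator {0<..} s * s powr (1 - 1) * exp (- (1 + u) * s)) \<partial>lborel)"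
        by (intro nn_integral_cong) (auto simp: indicator_def algebra_simps)
      also have "\<dots> = ennreal (Gamma 1 / (1 + u) powr 1)"
        using True by (intro nn_integral_gamma_kernel) auto
      finally show ?thesis using True by simp
    qed simp
  qed
  also have "\<dots> = ennreal (ln (1 + x))" by (rule nn_integral_inverse_one_plus_segment[OF assms])
  finally show ?thesis .
qed

lemma nn_integral_ln_one_plus_eq_ln1p_laplace:
  fixes P :: "real measure"
  assumes P: "prob_space P" and [measurable_cong]: "sets P = sets borel" and nonneg: "AE x in P. 0 \<le> x"
  shows "(\<integral>\<^sup>+x. ennreal (ln (1 + x)) \<partial>P) = ln1p_laplace (\<lambda>s. \<integral>x. exp (- s * x) \<partial>P)"
proof -
  interpret prob_space P by (rule P)
  interpret pair_sigma_finite P lborel ..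
  have "(\<integral>\<^sup>+x. ennreal (ln (1 + x)) \<partial>P)
      = (\<integral>\<^sup>+x. \<integral>\<^sup>+s. ennreal (indicator {0<..} s * exp (- s) * (1 - exp (- s * x)) / s) \<partial>lborel \<partial>P)"
    using nonneg by (intro nn_integral_cong_AE) (auto elim!: eventually_mono
                     simp: ln1p_laplace_exp[symmetric] ln1p_laplace_def)
  also have "\<dots> = (\<integral>\<^sup>+s. \<integral>\<^sup>+x. ennreal (indicator {0<..} s * exp (- s) * (1 - exp (- s * x)) / s) \<partial>P \<partial>lborel)"
    by (rule Fubini'[symmetric]) measurable
  also have "\<dots> = ln1p_laplace (\<lambda>s. \<integral>x. exp (- s * x) \<partial>P)"
    unfolding ln1p_laplace_def
  proof (intro nn_integral_cong)
    fix s :: real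
    show "(\<integral>\<^sup>+x. ennreal (indicator {0<..} s * exp (- s) * (1 - exp (- s * x)) / s) \<partial>P)
        = ennreal (indicator {0<..} s * exp (- s) * (1 - (\<integral>x. exp (- s * x) \<partial>P)) / s)"
    proof (cases "s > 0")
      case True
      have int_exp: "integrable P (\<lambda>x. exp (- s * x))"
        using nonneg True
        by (intro integrable_const_bound[where B=1]) (auto elim!: eventually_mono simp: mult_nonneg_nonneg)
      have "(\<integral>\<^sup>+x. ennreal (indicator {0<..} s * exp (- s) * (1 - exp (- s * x)) / s) \<partial>P)
          = (\<integral>\<^sup>+x. ennreal (exp (- s) / s * (1 - exp (- s * x))) \<partial>P)"
        using True by (intro nn_integral_cong) (simp add: field_simps)
      also have "\<dots> = ennreal (\<integral>x. exp (- s) / s * (1 - exp (- s * x)) \<partial>P)"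
        using int_exp nonneg True
        by (intro nn_integral_eq_integral integrable_mult_right Bochner_Integration.integrable_diff)
           (auto elim!: eventually_mono simp: mult_nonneg_nonneg)
      also have "(\<integral>x. exp (- s) / s * (1 - exp (- s * x)) \<partial>P) = exp (- s) / s * (1 - (\<integral>x. exp (- s * x) \<partial>P))"
        using int_exp by (simp add: Bochner_Integration.integral_diff prob_space)
      finally show ?thesis using True by (simp add: field_simps)
    qed simp
  qed
  finally show ?thesis .
qed

lemma ln1p_laplace_le:
  fixes L :: "real \<Rightarrow> real" and C :: real
  assumes C: "C \<ge> 0" and bound: "\<And>s. s > 0 \<Longrightarrow> 1 - L s \<le> C * s"
  shows "ln1p_laplace L \<le> ennreal C"
proof -
  have "ln1p_laplace L \<le> (\<integral>\<^sup>+s. ennreal C * ennreal (indicator {0<..} s * s powr (1 - 1) * exp (- 1 * s)) \<partial>lborel)"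
    unfolding ln1p_laplace_def
  proof (intro nn_integral_mono)
    fix s :: real
    show "ennreal (indicator {0<..} s * exp (- s) * (1 - L s) / s)
          \<le> ennreal C * ennreal (indicator {0<..} s * s powr (1 - 1) * exp (- 1 * s))"
    proof (cases "s > 0")
      case True
      have "exp (- s) * (1 - L s) / s \<le> exp (- s) * (C * s) / s"
        using bound[OF True] True by (intro divide_right_mono mult_left_mono) auto
      also have "\<dots> = C * exp (- s)" using True by simp
      finally show ?thesis using True C by (simp add: ennreal_mult'[symmetric] ennreal_leI)
    qed simp
  qed
  also have "\<dots> = ennreal C * (\<integral>\<^sup>+s. ennreal (indicator {0<..} s * s powr (1 - 1) * exp (- 1 * s)) \<partial>lborel)"
    by (rule nn_integral_cmult) simp
  also have "\<dots> = ennreal C * ennreal (Gamma 1 / 1 powr 1)"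
    by (subst nn_integral_gamma_kernel) simp_all
  finally show ?thesis by simp
qed

lemma one_minus_powr_neg_le:
  fixes lam a s :: real
  assumes "lam > 0" "a > 0" "s \<ge> 0"
  shows "1 - (1 + a * s) powr (- lam) \<le> lam * a * s"
proof -
  have pos: "1 + a * s > 0" using assms by (simp add: add_pos_nonneg)
  have "exp (- (lam * a * s)) \<le> exp (- lam * ln (1 + a * s))"
    using ln_le_minus_one[OF pos] assms by (simp add: mult_left_mono)
  also have "\<dots> = (1 + a * s) powr (- lam)" using pos by (simp add: powr_def)
  finally show ?thesis using exp_ge_add_one_self[of "- (lam * a * s)"] by simp
qed

definition gamma_density :: "real \<Rightarrow> real \<Rightarrow> real \<Rightarrow> real" where
  "gamma_density lam z t = indicator {0<..} t * (z powr lam / Gamma lam) * exp (- z * t) * t powr (lam - 1)"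

lemma gamma_law:
  fixes lam z :: real
  defines "P \<equiv> density lborel (\<lambda>t. ennreal (gamma_density lam z t))"
  assumes lam: "lam > 0" and z: "z > 0"
  shows "prob_space P" and "AE t in P. 0 \<le> t"
    and "\<And>s. s \<ge> 0 \<Longrightarrow> (\<integral>t. exp (- s * t) \<partial>P) = (1 + s / z) powr (- lam)"
proof -
  define c where "c = z powr lam / Gamma lam"
  have c: "c > 0" using z Gamma_real_pos[OF lam] by (simp add: c_def)
  have [measurable_cong]: "sets P = sets borel" by (simp add: P_def)
  have laplace_nn: "(\<integral>\<^sup>+t. ennreal (exp (- s * t)) \<partial>P) = ennreal ((1 + s / z) powr (- lam))"
    if s: "s \<ge> 0" for s
  proof -
    have "c * (Gamma lam / (z + s) powr lam) = (z / (z + s)) powr lam"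
      using Gamma_real_pos[OF lam] z s by (simp add: c_def powr_divide)
    also have "z / (z + s) = inverse (1 + s / z)" using z s by (simp add: field_simps)
    finally have scale: "c * (Gamma lam / (z + s) powr lam) = (1 + s / z) powr (- lam)"
      using z s by (simp add: inverse_powr powr_minus)
    have "exp (- (z + s) * t) = exp (- z * t) * exp (- s * t)" for t
      by (simp add: algebra_simps flip: exp_add)
    then have "(\<integral>\<^sup>+t. ennreal (exp (- s * t)) \<partial>P)
        = (\<integral>\<^sup>+t. ennreal c * ennreal (indicator {0<..} t * t powr (lam - 1) * exp (- (z + s) * t)) \<partial>lborel)"
      unfolding P_def using c
      by (subst nn_integral_density)
         (auto intro!: nn_integral_cong simp: gamma_density_def c_def ennreal_mult'[symmetric] indicator_def
                                             mult_ac)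
    also have "\<dots> = ennreal c * ennreal (Gamma lam / (z + s) powr lam)"
      using nn_integral_gamma_kernel[OF lam, of "z + s"] z s by (subst nn_integral_cmult) auto
    also have "\<dots> = ennreal ((1 + s / z) powr (- lam))"
      unfolding scale[symmetric] by (rule ennreal_mult'[symmetric]) (use c in simp)
    finally show ?thesis .
  qed
  show P: "prob_space P"
    by (rule prob_spaceI) (use laplace_nn[of 0] in \<open>simp add: P_def\<close>)
  show nonneg: "AE t in P. 0 \<le> t"
    unfolding P_def by (subst AE_density) (auto simp: gamma_density_def indicator_def)
  show "(\<integral>t. exp (- s * t) \<partial>P) = (1 + s / z) powr (- lam)" if s: "s \<ge> 0" for s
  proof -
    interpret prob_space P by (rule P)
    have "integrable P (\<lambda>t. exp (- s * t))"
      using nonneg s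
      by (intro integrable_const_bound[where B=1]) (auto elim!: eventually_mono simp: mult_nonneg_nonneg)
    then show ?thesis
      using laplace_nn[OF s] z s by (simp add: nn_integral_eq_integral)
  qed
qed

lemma ln1p_laplace_gamma:
  fixes lam z :: real
  assumes lam: "lam > 0" and z: "z > 0"
  shows "ln1p_laplace (\<lambda>s. (1 + s / z) powr (- lam))
       = ennreal (z powr lam / Gamma lam) *
         (\<integral>\<^sup>+t. ennreal (indicator {0<..} t * exp (- z * t) * t powr (lam - 1) * ln (1 + t)) \<partial>lborel)"
proof -
  let ?P = "density lborel (\<lambda>t. ennreal (gamma_density lam z t))"
  have "ln1p_laplace (\<lambda>s. (1 + s / z) powr (- lam)) = ln1p_laplace (\<lambda>s. \<integral>t. exp (- s * t) \<partial>?P)"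
    unfolding ln1p_laplace_def
  proof (intro nn_integral_cong)
    fix s :: real
    show "ennreal (indicator {0<..} s * exp (- s) * (1 - (1 + s / z) powr (- lam)) / s)
        = ennreal (indicator {0<..} s * exp (- s) * (1 - (\<integral>t. exp (- s * t) \<partial>?P)) / s)"
      using gamma_law(3)[OF lam z, of s] by (cases "s > 0") auto
  qed
  also have "\<dots> = (\<integral>\<^sup>+t. ennreal (ln (1 + t)) \<partial>?P)"
    using gamma_law(1,2)[OF lam z] by (intro nn_integral_ln_one_plus_eq_ln1p_laplace[symmetric]) auto
  also have "\<dots> = (\<integral>\<^sup>+t. ennreal (z powr lam / Gamma lam) *
                        ennreal (indicator {0<..} t * exp (- z * t) * t powr (lam - 1) * ln (1 + t)) \<partial>lborel)"
    using z Gamma_real_pos[OF lam]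
    by (subst nn_integral_density)
       (auto intro!: nn_integral_cong simp: gamma_density_def ennreal_mult'[symmetric] indicator_def)
  also have "\<dots> = ennreal (z powr lam / Gamma lam) *
                    (\<integral>\<^sup>+t. ennreal (indicator {0<..} t * exp (- z * t) * t powr (lam - 1) * ln (1 + t)) \<partial>lborel)"
    by (rule nn_integral_cmult) simp
  finally show ?thesis .
qed

lemma ln_one_plus_sums:
  fixes t :: real
  assumes "t \<ge> 0"
  shows "(\<lambda>k. (t / (1 + t)) ^ Suc k / real (Suc k)) sums ln (1 + t)"
proof -
  define y where "y = t / (1 + t)"
  have y: "0 \<le> y" "y < 1" using assms by (auto simp: y_def)
  have "(\<lambda>n. - ((- (- y)) ^ n) / of_nat n) sums ln (1 + - y)"
    by (rule ln_series') (use y in auto)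
  then have "(\<lambda>n. y ^ n / real n) sums (- ln (1 - y))"
    using sums_minus by fastforce
  moreover have "1 - y = inverse (1 + t)" using assms by (simp add: y_def field_simps)
  ultimately have "(\<lambda>n. y ^ n / real n) sums ln (1 + t)"
    using assms by (simp add: ln_inverse)
  then show ?thesis unfolding y_def[symmetric] by (subst sums_Suc_iff) simp
qed

lemma sums_enn2real_suminf:
  fixes A :: "nat \<Rightarrow> ennreal"
  assumes fin: "(\<Sum>k. A k) \<noteq> \<infinity>"
  shows "(\<lambda>k. enn2real (A k)) sums enn2real (\<Sum>k. A k)"
proof -
  have "A k \<noteq> \<infinity>" for k
    using ennreal_suminf_lessD[of A \<infinity> k] fin by (auto simp: top_unique less_top)
  then have eq: "(\<Sum>k. ennreal (enn2real (A k))) = (\<Sum>k. A k)"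
    by (simp add: ennreal_enn2real_if)
  have summable: "summable (\<lambda>k. enn2real (A k))"
    by (rule summable_suminf_not_top) (use eq fin in auto)
  have "ennreal (\<Sum>k. enn2real (A k)) = (\<Sum>k. A k)"
    using suminf_ennreal2[of "\<lambda>k. enn2real (A k)", OF _ summable] eq by simp
  then have "(\<Sum>k. enn2real (A k)) = enn2real (\<Sum>k. A k)"
    by (metis enn2real_ennreal enn2real_nonneg suminf_nonneg summable)
  with summable show ?thesis using summable_sums by fastforce
qed

lemma kummerU_term_eq_nn_integral:
  fixes lam z :: real and k :: nat
  assumes lam: "lam > 0"
  shows "1 / real (Suc k) * Gamma (real (Suc k) + lam) * kummerU (real (Suc k) + lam) (1 + lam) z
       = enn2real (\<integral>\<^sup>+t. ennreal (indicator {0<..} t * exp (- z * t) * t powr (lam - 1) *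
                                       ((t / (1 + t)) ^ Suc k / real (Suc k))) \<partial>lborel)"
proof -
  define a where "a = real (Suc k) + lam"
  define U where "U t = indicator {0<..} t * (exp (- z * t) * t powr (a - 1) * (1 + t) powr (1 + lam - a - 1))" for t
  have "a > 0" using lam by (simp add: a_def)
  then have "Gamma a \<noteq> 0" using Gamma_real_pos[of a] by linarith
  then have "Gamma a * kummerU a (1 + lam) z = enn2real (\<integral>\<^sup>+t. ennreal (U t) \<partial>lborel)"
    unfolding kummerU_def set_lebesgue_integral_def U_def
    by (subst integral_eq_nn_integral) (auto simp: indicator_def)
  then have "1 / real (Suc k) * (Gamma a * kummerU a (1 + lam) z)
           = enn2real (ennreal (1 / real (Suc k)) * (\<integral>\<^sup>+t. ennreal (U t) \<partial>lborel))"
    by (simp add: enn2real_mult)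
  also have "\<dots> = enn2real (\<integral>\<^sup>+t. ennreal (indicator {0<..} t * exp (- z * t) * t powr (lam - 1) *
                                            ((t / (1 + t)) ^ Suc k / real (Suc k))) \<partial>lborel)"
  proof -
    have "ennreal (1 / real (Suc k)) * ennreal (U t)
        = ennreal (indicator {0<..} t * exp (- z * t) * t powr (lam - 1) * ((t / (1 + t)) ^ Suc k / real (Suc k)))" for t
    proof (cases "t > 0")
      case True
      have "a - 1 = (lam - 1) + real (Suc k)" by (simp add: a_def)
      then have "t powr (a - 1) = t powr (lam - 1) * t powr real (Suc k)"
        by (simp only: powr_add)
      then have e1: "t powr (a - 1) = t powr (lam - 1) * t ^ Suc k"
        using True by (simp only: powr_realpow)
      have "1 + lam - a - 1 = - real (Suc k)" by (simp add: a_def)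
      then have "(1 + t) powr (1 + lam - a - 1) = 1 / (1 + t) powr real (Suc k)"
        by (simp only: powr_minus_divide)
      then have e2: "(1 + t) powr (1 + lam - a - 1) = 1 / (1 + t) ^ Suc k"
        using True by (simp only: powr_realpow)
      show ?thesis
        using True unfolding U_def e1 e2 by (simp add: ennreal_mult'[symmetric] power_divide field_simps)
    qed (simp add: U_def)
    then show ?thesis by (subst nn_integral_cmult[symmetric]) (auto simp: U_def)
  qed
  finally show ?thesis by (simp add: a_def mult.assoc)
qed

text \<open>Expanding \<open>ln (1 + t) = \<Sum>\<^sub>k (t / (1 + t))\<^sup>k / k\<close> under the integral turns each term into
  a Kummer \<open>U\<close> integral.\<close>
lemma kummerU_series_sums_ln_moment:
  fixes lam z :: real
  assumes lam: "lam > 0"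
    and finite: "(\<integral>\<^sup>+t. ennreal (indicator {0<..} t * exp (- z * t) * t powr (lam - 1) * ln (1 + t)) \<partial>lborel) \<noteq> \<infinity>"
  shows "(\<lambda>k. 1 / real (Suc k) * Gamma (real (Suc k) + lam) * kummerU (real (Suc k) + lam) (1 + lam) z)
          sums enn2real (\<integral>\<^sup>+t. ennreal (indicator {0<..} t * exp (- z * t) * t powr (lam - 1) * ln (1 + t)) \<partial>lborel)"
proof -
  define F where "F k t = indicator {0<..} t * exp (- z * t) * t powr (lam - 1) * ((t / (1 + t)) ^ Suc k / real (Suc k))"
    for k t
  have "(\<Sum>k. \<integral>\<^sup>+t. ennreal (F k t) \<partial>lborel) = (\<integral>\<^sup>+t. (\<Sum>k. ennreal (F k t)) \<partial>lborel)"
    unfolding F_def by (rule nn_integral_suminf[symmetric]) measurable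
  also have "\<dots> = (\<integral>\<^sup>+t. ennreal (indicator {0<..} t * exp (- z * t) * t powr (lam - 1) * ln (1 + t)) \<partial>lborel)"
  proof (intro nn_integral_cong)
    fix t :: real
    show "(\<Sum>k. ennreal (F k t)) = ennreal (indicator {0<..} t * exp (- z * t) * t powr (lam - 1) * ln (1 + t))"
    proof (cases "t > 0")
      case True
      have "(\<lambda>k. F k t) sums (indicator {0<..} t * exp (- z * t) * t powr (lam - 1) * ln (1 + t))"
        unfolding F_def by (rule sums_mult[OF ln_one_plus_sums]) (use True in simp)
      then show ?thesis
        using True by (subst sums_unique[symmetric]) (auto simp: sums_ennreal F_def)
    qed (simp add: F_def)
  qed
  finally have series: "(\<Sum>k. \<integral>\<^sup>+t. ennreal (F k t) \<partial>lborel)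
      = (\<integral>\<^sup>+t. ennreal (indicator {0<..} t * exp (- z * t) * t powr (lam - 1) * ln (1 + t)) \<partial>lborel)" .
  have "(\<lambda>k. enn2real (\<integral>\<^sup>+t. ennreal (F k t) \<partial>lborel)) sums enn2real (\<Sum>k. \<integral>\<^sup>+t. ennreal (F k t) \<partial>lborel)"
    by (rule sums_enn2real_suminf) (use series finite in simp)
  then show ?thesis
    unfolding series unfolding F_def kummerU_term_eq_nn_integral[OF lam, symmetric] .
qed

definition gamma_ln_moment :: "real \<Rightarrow> real \<Rightarrow> real" where
  "gamma_ln_moment lam z = (LINT t:{0<..}|lborel. exp (- z * t) * t powr (lam - 1) * ln (1 + t))"

lemma gamma_ln_moment_nonneg: "gamma_ln_moment lam z \<ge> 0"
  unfolding gamma_ln_moment_def set_lebesgue_integral_def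
  by (intro integral_nonneg_AE) (auto simp: indicator_def)

lemma ln1p_laplace_gamma_kummerU:
  fixes lam z :: real
  assumes lam: "lam > 0" and z: "z > 0"
  shows "ln1p_laplace (\<lambda>s. (1 + s / z) powr (- lam)) = ennreal (z powr lam / Gamma lam * gamma_ln_moment lam z)"
    and "(\<lambda>k. 1 / real (Suc k) * Gamma (real (Suc k) + lam) * kummerU (real (Suc k) + lam) (1 + lam) z)
           sums gamma_ln_moment lam z"
proof -
  define I where "I = (\<integral>\<^sup>+t. ennreal (indicator {0<..} t * exp (- z * t) * t powr (lam - 1) * ln (1 + t)) \<partial>lborel)"
  have c: "z powr lam / Gamma lam > 0" using z Gamma_real_pos[OF lam] by simp
  have eq: "ln1p_laplace (\<lambda>s. (1 + s / z) powr (- lam)) = ennreal (z powr lam / Gamma lam) * I"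
    unfolding I_def by (rule ln1p_laplace_gamma[OF lam z])
  have "ln1p_laplace (\<lambda>s. (1 + s / z) powr (- lam)) \<le> ennreal (lam * (1 / z))"
  proof (rule ln1p_laplace_le)
    show "1 - (1 + s / z) powr (- lam) \<le> lam * (1 / z) * s" if "s > 0" for s
      using one_minus_powr_neg_le[of lam "1 / z" s] lam z that by simp
  qed (use lam z in simp)
  then have finite: "I \<noteq> \<infinity>"
    using c z Gamma_real_pos[OF lam] unfolding eq by (auto simp: ennreal_mult_top top_unique)
  moreover have moment: "gamma_ln_moment lam z = enn2real I"
    unfolding gamma_ln_moment_def set_lebesgue_integral_def I_def
    by (subst integral_eq_nn_integral) (auto simp: indicator_def mult_ac)
  ultimately show "ln1p_laplace (\<lambda>s. (1 + s / z) powr (- lam)) = ennreal (z powr lam / Gamma lam * gamma_ln_moment lam z)"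
    using c unfolding eq by (subst ennreal_mult') (auto simp: ennreal_enn2real_if)
  show "(\<lambda>k. 1 / real (Suc k) * Gamma (real (Suc k) + lam) * kummerU (real (Suc k) + lam) (1 + lam) z)
           sums gamma_ln_moment lam z"
    unfolding moment I_def
    by (rule kummerU_series_sums_ln_moment[OF lam]) (use finite I_def in simp)
qed

lemma one_minus_kms_mgf_le:
  fixes \<kappa> \<mu> m g s :: real
  assumes \<kappa>: "\<kappa> \<ge> 0" and \<mu>: "\<mu> > 0" and m: "m > 0" and g: "g > 0" and s: "s \<ge> 0"
  shows "1 - kms_mgf \<kappa> \<mu> m g (- s) \<le> g * s"
proof -
  define a where "a = g / (\<mu> * (1 + \<kappa>))"
  define b where "b = (\<mu> * \<kappa> + m) * a / m"
  define X where "X = 1 + a * s"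
  define Y where "Y = 1 + b * s"
  have a: "a > 0" using g \<mu> \<kappa> by (simp add: a_def)
  have b_minus_a: "b - a = \<mu> * \<kappa> * a / m" using m by (simp add: b_def field_simps)
  have "b - a \<ge> 0" unfolding b_minus_a using \<mu> \<kappa> a m by simp
  then have X: "X \<ge> 1" and Y: "Y \<ge> X"
    using a s by (simp_all add: X_def Y_def mult_right_mono)
  have mgf: "kms_mgf \<kappa> \<mu> m g (- s) = X powr (m - \<mu>) * Y powr (- m)"
    unfolding kms_mgf_def X_def Y_def a_def b_def by (simp add: mult_ac)
  have ln_X: "ln X \<le> a * s" using ln_le_minus_one[of X] X by (simp add: X_def)
  have "ln Y - ln X = ln (Y / X)" using X Y by (simp add: ln_div)
  also have "\<dots> \<le> Y / X - 1" using X Y by (intro ln_le_minus_one) simp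
  also have "\<dots> = (b - a) * s / X" using X by (simp add: X_def Y_def field_simps)
  also have "\<dots> \<le> (b - a) * s"
    using X mult_nonneg_nonneg[OF \<open>b - a \<ge> 0\<close> s] by (simp add: divide_le_eq mult_le_cancel_left1)
  finally have ln_Y_X: "ln Y - ln X \<le> (b - a) * s" .
  have "\<mu> * a * (1 + \<kappa>) = g" using \<mu> \<kappa> by (simp add: a_def)
  moreover have "m * ((b - a) * s) = \<mu> * \<kappa> * a * s" using m unfolding b_minus_a by simp
  ultimately have "- (g * s) = - \<mu> * (a * s) - m * ((b - a) * s)" by (auto simp: algebra_simps)
  also have "\<dots> \<le> - \<mu> * ln X - m * (ln Y - ln X)"
    using ln_X ln_Y_X \<mu> m by (smt (verit) mult_left_mono mult_minus_left)
  also have "\<dots> = (m - \<mu>) * ln X - m * ln Y" by (simp add: algebra_simps)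
  finally have "exp (- (g * s)) \<le> X powr (m - \<mu>) * Y powr (- m)"
    using X Y by (simp add: powr_def exp_diff exp_minus field_simps exp_add[symmetric])
  then show ?thesis
    unfolding mgf using exp_ge_add_one_self[of "- (g * s)"] by simp
qed

text \<open>The weights of the negative-binomial mixture representation of the \<open>\<kappa>\<close>-\<open>\<mu>\<close> shadowed law.\<close>
definition nb_weight :: "real \<Rightarrow> real \<Rightarrow> real \<Rightarrow> nat \<Rightarrow> real" where
  "nb_weight \<kappa> \<mu> m i =
     (m / (m + \<mu> * \<kappa>)) powr m * (pochhammer m i / fact i) * (\<mu> * \<kappa> / (m + \<mu> * \<kappa>)) ^ i"

lemma nb_weight_nonneg: "\<kappa> \<ge> 0 \<Longrightarrow> \<mu> > 0 \<Longrightarrow> m > 0 \<Longrightarrow> nb_weight \<kappa> \<mu> m i \<ge> 0"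
  unfolding nb_weight_def by (intro mult_nonneg_nonneg divide_nonneg_nonneg pochhammer_nonneg) auto

lemma pochhammer_binomial_sums:
  fixes m x :: real
  assumes "\<bar>x\<bar> < 1"
  shows "(\<lambda>n. pochhammer m n / fact n * x ^ n) sums (1 - x) powr (- m)"
proof -
  have "(- m gchoose n) * (- x) ^ n = pochhammer m n / fact n * x ^ n" for n
  proof -
    have "(- m gchoose n) = (-1) ^ n * (pochhammer m n / fact n)" by (simp add: gbinomial_pochhammer)
    moreover have "(- x) ^ n = (-1) ^ n * x ^ n" by (rule power_minus)
    ultimately have "(- m gchoose n) * (- x) ^ n = ((-1) ^ n * (-1) ^ n) * (pochhammer m n / fact n * x ^ n)"
      by (simp only: mult_ac)
    also have "(-1 :: real) ^ n * (-1) ^ n = 1" by (simp flip: power_mult_distrib)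
    finally show ?thesis by simp
  qed
  with gen_binomial_real[of "- x" "- m"] assms show ?thesis by simp
qed

lemma kms_mgf_neg_eq:
  fixes \<kappa> \<mu> m g s :: real
  defines "X \<equiv> 1 + g / (\<mu> * (1 + \<kappa>)) * s" and "c \<equiv> \<mu> * \<kappa> / (m + \<mu> * \<kappa>)"
  assumes \<kappa>: "\<kappa> \<ge> 0" and \<mu>: "\<mu> > 0" and m: "m > 0" and g: "g > 0" and s: "s \<ge> 0"
  shows "kms_mgf \<kappa> \<mu> m g (- s) = (m / (m + \<mu> * \<kappa>)) powr m * X powr (- \<mu>) * (1 - c / X) powr (- m)"
proof -
  have mk: "m + \<mu> * \<kappa> > 0" using m \<mu> \<kappa> by (simp add: add_pos_nonneg)
  have X: "X \<ge> 1" using g \<mu> \<kappa> s by (simp add: X_def)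
  have "c * (m + \<mu> * \<kappa>) = \<mu> * \<kappa>" using mk by (simp add: c_def)
  moreover have "X * ((m + \<mu> * \<kappa>) / m) * (1 - c / X) = ((m + \<mu> * \<kappa>) * X - c * (m + \<mu> * \<kappa>)) / m"
    using X m by (simp add: field_simps)
  ultimately have "X * ((m + \<mu> * \<kappa>) / m) * (1 - c / X) = ((m + \<mu> * \<kappa>) * X - \<mu> * \<kappa>) / m"
    by simp
  also have "\<dots> = 1 + (\<mu> * \<kappa> + m) * (X - 1) / m"
    using m by (simp add: field_simps)
  also have "\<dots> = 1 + (\<mu> * \<kappa> + m) * (g / (\<mu> * (1 + \<kappa>)) * s) / m" by (simp add: X_def)
  also have "\<dots> = 1 - (\<mu> * \<kappa> + m) * g * (- s) / (m * \<mu> * (1 + \<kappa>))"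
    by (simp add: mult_ac)
  finally have "1 - (\<mu> * \<kappa> + m) * g * (- s) / (m * \<mu> * (1 + \<kappa>)) = X * ((m + \<mu> * \<kappa>) / m) * (1 - c / X)" ..
  moreover have "1 - g * (- s) / (\<mu> * (1 + \<kappa>)) = X" by (simp add: X_def)
  ultimately have "kms_mgf \<kappa> \<mu> m g (- s) = X powr (m - \<mu>) * (X * ((m + \<mu> * \<kappa>) / m) * (1 - c / X)) powr (- m)"
    unfolding kms_mgf_def by simp
  also have "\<dots> = X powr (m - \<mu>) * X powr (- m) * ((m + \<mu> * \<kappa>) / m) powr (- m) * (1 - c / X) powr (- m)"
    by (simp only: powr_mult mult.assoc)
  also have "X powr (m - \<mu>) * X powr (- m) = X powr (- \<mu>)" by (simp add: powr_add[symmetric])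
  also have "((m + \<mu> * \<kappa>) / m) powr (- m) = (m / (m + \<mu> * \<kappa>)) powr m"
    using mk m by (simp add: powr_divide powr_minus_divide)
  finally show ?thesis by (simp add: mult_ac)
qed

lemma kms_mgf_sums_gamma_mixture:
  fixes \<kappa> \<mu> m g s :: real
  assumes \<kappa>: "\<kappa> \<ge> 0" and \<mu>: "\<mu> > 0" and m: "m > 0" and g: "g > 0" and s: "s \<ge> 0"
  shows "(\<lambda>i. nb_weight \<kappa> \<mu> m i * (1 + g / (\<mu> * (1 + \<kappa>)) * s) powr (- (\<mu> + real i)))
           sums kms_mgf \<kappa> \<mu> m g (- s)"
proof -
  define X where "X = 1 + g / (\<mu> * (1 + \<kappa>)) * s"
  define c where "c = \<mu> * \<kappa> / (m + \<mu> * \<kappa>)"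
  define C where "C = (m / (m + \<mu> * \<kappa>)) powr m * X powr (- \<mu>)"
  have X: "X \<ge> 1" using g \<mu> \<kappa> s by (simp add: X_def)
  have mk: "m + \<mu> * \<kappa> > 0" using m \<mu> \<kappa> by (simp add: add_pos_nonneg)
  have "\<mu> * \<kappa> < (m + \<mu> * \<kappa>) * 1" using m by simp
  also have "\<dots> \<le> (m + \<mu> * \<kappa>) * X" using X mk by (intro mult_left_mono) auto
  finally have "\<bar>c / X\<bar> < 1"
    using X \<mu> \<kappa> mk by (simp add: c_def abs_of_nonneg divide_less_eq)
  then have "(\<lambda>i. C * (pochhammer m i / fact i * (c / X) ^ i)) sums (C * (1 - c / X) powr (- m))"
    by (intro sums_mult pochhammer_binomial_sums)
  moreover have "X powr (- (\<mu> + real i)) = X powr (- \<mu>) * (1 / X) ^ i" for i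
  proof -
    have "X powr (- (\<mu> + real i)) = X powr (- \<mu>) * X powr (- real i)"
      by (simp add: powr_add[symmetric])
    also have "X powr (- real i) = (1 / X) ^ i"
      using X by (simp add: powr_minus powr_realpow power_one_over inverse_eq_divide)
    finally show ?thesis .
  qed
  then have "nb_weight \<kappa> \<mu> m i * X powr (- (\<mu> + real i)) = C * (pochhammer m i / fact i * (c / X) ^ i)" for i
    by (simp add: nb_weight_def C_def c_def power_divide power_mult_distrib mult_ac)
  ultimately show ?thesis
    using kms_mgf_neg_eq[OF assms] by (simp add: X_def c_def C_def mult_ac)
qed

lemma nb_weight_sums_one:
  assumes "\<kappa> \<ge> 0" "\<mu> > 0" "m > 0"
  shows "nb_weight \<kappa> \<mu> m sums 1"
  using kms_mgf_sums_gamma_mixture[OF assms zero_less_one order_refl] by (simp add: kms_mgf_def)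

lemma ln1p_laplace_mixture:
  fixes p :: "nat \<Rightarrow> real" and L :: "nat \<Rightarrow> real \<Rightarrow> real" and L' :: "real \<Rightarrow> real"
  assumes p_nonneg: "\<And>i. p i \<ge> 0" and p_sums: "p sums 1"
    and L_le: "\<And>i s. s > 0 \<Longrightarrow> L i s \<le> 1"
    and L_measurable[measurable]: "\<And>i. L i \<in> borel_measurable borel"
    and mixture: "\<And>s. s > 0 \<Longrightarrow> (\<lambda>i. p i * L i s) sums L' s"
  shows "ln1p_laplace L' = (\<Sum>i. ennreal (p i) * ln1p_laplace (L i))"
proof -
  define G where "G i s = indicator {0<..} s * exp (- s) * (1 - L i s) / s" for i s
  have G_nonneg: "G i s \<ge> 0" for i s
    using L_le[of s i] by (cases "s > 0") (auto simp: G_def)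
  have "ln1p_laplace L' = (\<integral>\<^sup>+s. (\<Sum>i. ennreal (p i) * ennreal (G i s)) \<partial>lborel)"
    unfolding ln1p_laplace_def
  proof (intro nn_integral_cong)
    fix s :: real
    show "ennreal (indicator {0<..} s * exp (- s) * (1 - L' s) / s) = (\<Sum>i. ennreal (p i) * ennreal (G i s))"
    proof (cases "s > 0")
      case True
      have "(\<lambda>i. exp (- s) / s * (p i - p i * L i s)) sums (exp (- s) / s * (1 - L' s))"
        by (intro sums_mult sums_diff p_sums mixture True)
      moreover have "exp (- s) / s * (p i - p i * L i s) = p i * G i s" for i
        using True by (simp add: G_def field_simps)
      ultimately have sums: "(\<lambda>i. p i * G i s) sums (indicator {0<..} s * exp (- s) * (1 - L' s) / s)"
        using True by (simp add: mult_ac)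
      then have "0 \<le> indicator {0<..} s * exp (- s) * (1 - L' s) / s"
        using p_nonneg G_nonneg by (intro sums_le[OF _ sums_zero sums]) simp
      with sums have "(\<lambda>i. ennreal (p i * G i s)) sums ennreal (indicator {0<..} s * exp (- s) * (1 - L' s) / s)"
        using p_nonneg G_nonneg by (subst sums_ennreal) auto
      then show ?thesis using p_nonneg by (simp add: sums_iff ennreal_mult')
    qed (simp add: G_def)
  qed
  also have "\<dots> = (\<Sum>i. ennreal (p i) * ln1p_laplace (L i))"
    by (subst nn_integral_suminf) (auto simp: G_def ln1p_laplace_def nn_integral_cmult)
  finally show ?thesis .
qed

lemma nn_integral_ln_kms_law:
  fixes \<kappa> \<mu> m g :: real and N :: "real measure"
  assumes \<kappa>: "\<kappa> \<ge> 0" and \<mu>: "\<mu> > 0" and m: "m > 0" and g: "g > 0"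
    and law: "is_kms_law \<kappa> \<mu> m g N"
  shows "(\<integral>\<^sup>+x. ennreal (indicator {0<..} x * ln (1 + x)) \<partial>N) = ln1p_laplace (\<lambda>s. kms_mgf \<kappa> \<mu> m g (- s))"
proof -
  from law have P: "prob_space N" and sets_N: "sets N = sets borel" and pos: "AE x in N. 0 < x"
    and mgf: "\<And>s. s \<le> 0 \<Longrightarrow> (\<integral>x. exp (s * x) \<partial>N) = kms_mgf \<kappa> \<mu> m g s"
    unfolding is_kms_law_def by auto
  have "(\<integral>\<^sup>+x. ennreal (indicator {0<..} x * ln (1 + x)) \<partial>N) = (\<integral>\<^sup>+x. ennreal (ln (1 + x)) \<partial>N)"
    using pos by (intro nn_integral_cong_AE) (auto elim!: eventually_mono)
  also have "\<dots> = ln1p_laplace (\<lambda>s. \<integral>x. exp (- s * x) \<partial>N)"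
    using pos by (intro nn_integral_ln_one_plus_eq_ln1p_laplace[OF P sets_N]) (auto elim!: eventually_mono)
  also have "\<dots> = ln1p_laplace (\<lambda>s. kms_mgf \<kappa> \<mu> m g (- s))"
    unfolding ln1p_laplace_def
  proof (intro nn_integral_cong)
    fix s :: real
    show "ennreal (indicator {0<..} s * exp (- s) * (1 - (\<integral>x. exp (- s * x) \<partial>N)) / s)
        = ennreal (indicator {0<..} s * exp (- s) * (1 - kms_mgf \<kappa> \<mu> m g (- s)) / s)"
      using mgf[of "- s"] by (cases "s > 0") auto
  qed
  finally show ?thesis .
qed

lemma nn_integral_ln_kms_law_le:
  fixes \<kappa> \<mu> m g :: real and N :: "real measure"
  assumes "\<kappa> \<ge> 0" "\<mu> > 0" "m > 0" "g > 0" "is_kms_law \<kappa> \<mu> m g N"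
  shows "(\<integral>\<^sup>+x. ennreal (indicator {0<..} x * ln (1 + x)) \<partial>N) \<le> ennreal g"
  unfolding nn_integral_ln_kms_law[OF assms]
  using assms by (intro ln1p_laplace_le one_minus_kms_mgf_le) auto

lemma nn_integral_ln_kms_law_sums:
  fixes \<kappa> \<mu> m g :: real and N :: "real measure"
  assumes \<kappa>: "\<kappa> \<ge> 0" and \<mu>: "\<mu> > 0" and m: "m > 0" and g: "g > 0"
    and law: "is_kms_law \<kappa> \<mu> m g N"
  shows "(\<integral>\<^sup>+x. ennreal (indicator {0<..} x * ln (1 + x)) \<partial>N)
       = (\<Sum>i. ennreal (nb_weight \<kappa> \<mu> m i) *
               ln1p_laplace (\<lambda>s. (1 + g / (\<mu> * (1 + \<kappa>)) * s) powr (- (\<mu> + real i))))"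
  unfolding nn_integral_ln_kms_law[OF assms]
proof (rule ln1p_laplace_mixture)
  show "(1 + g / (\<mu> * (1 + \<kappa>)) * s) powr (- (\<mu> + real i)) \<le> 1" if "s > 0" for i s
    using powr_mono2'[of "- (\<mu> + real i)" 1 "1 + g / (\<mu> * (1 + \<kappa>)) * s"] that \<kappa> \<mu> g by simp
qed (use assms nb_weight_nonneg nb_weight_sums_one kms_mgf_sums_gamma_mixture in auto)

lemma measure_UNIV_Diff_prob:
  fixes P :: "real measure"
  assumes "prob_space P" "sets P = sets borel" "A \<in> sets borel"
  shows "measure P (UNIV - A) = 1 - measure P A"
proof -
  interpret prob_space P by fact
  show ?thesis
    using prob_compl[of A] assms sets_eq_imp_space_eq[of P borel] by (simp add: Compl_eq_Diff_UNIV)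
qed

text \<open>The mixture identity is stated with a Bochner integral, which is \<open>0\<close> on non-integrable
  functions; integrability follows because \<open>A\<close> and its complement cannot both get mass \<open>0\<close>.\<close>
lemma mixture_set_integrable:
  fixes M :: "real measure" and N :: "real \<Rightarrow> real measure"
  assumes M: "prob_space M" "sets M = sets borel"
    and N: "\<And>\<theta>. \<theta> \<in> {0..pi} \<Longrightarrow> prob_space (N \<theta>) \<and> sets (N \<theta>) = sets borel"
    and mixture: "\<forall>A\<in>sets borel. measure M A = (LINT \<theta>:{0..pi}|lborel. measure (N \<theta>) A) / pi"
    and A: "A \<in> sets borel"
  shows "set_integrable lborel {0..pi} (\<lambda>\<theta>. measure (N \<theta>) A)"
proof (rule ccontr)
  assume not_int: "\<not> ?thesis"
  have "\<not> set_integrable lborel {0..pi} (\<lambda>\<theta>. measure (N \<theta>) (UNIV - A))"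
  proof
    assume "set_integrable lborel {0..pi} (\<lambda>\<theta>. measure (N \<theta>) (UNIV - A))"
    then have "set_integrable lborel {0..pi} (\<lambda>\<theta>. 1 - measure (N \<theta>) (UNIV - A))"
      by (intro set_integral_diff(1)) (auto simp: set_integrable_def)
    moreover have "(\<lambda>\<theta>. indicator {0..pi} \<theta> *\<^sub>R (1 - measure (N \<theta>) (UNIV - A)))
                 = (\<lambda>\<theta>. indicator {0..pi} \<theta> *\<^sub>R measure (N \<theta>) A)"
      using N A by (auto simp: indicator_def measure_UNIV_Diff_prob)
    ultimately show False using not_int unfolding set_integrable_def by simp
  qed
  then have "measure M A = 0" "measure M (UNIV - A) = 0"
    using mixture A not_int unfolding set_lebesgue_integral_def set_integrable_def
    by (auto simp: not_integrable_integral_eq)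
  with measure_UNIV_Diff_prob[OF M A] show False by simp
qed

definition uniform_angle :: "real measure" where
  "uniform_angle = density lborel (\<lambda>\<theta>. ennreal (indicator {0..pi} \<theta> / pi))"

lemma sets_uniform_angle [measurable_cong, simp]: "sets uniform_angle = sets borel"
  by (simp add: uniform_angle_def)

lemma nn_integral_uniform_angle:
  assumes "f \<in> borel_measurable borel"
  shows "(\<integral>\<^sup>+\<theta>. f \<theta> \<partial>uniform_angle) = (\<integral>\<^sup>+\<theta>. ennreal (indicator {0..pi} \<theta> / pi) * f \<theta> \<partial>lborel)"
  using assms unfolding uniform_angle_def by (subst nn_integral_density) auto

text \<open>Outside \<open>[0, pi]\<close>, where the uniform angle has no mass, the kernel is extended by \<open>N 0\<close>.\<close>
lemma mixture_eq_bind: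
  fixes M :: "real measure" and N :: "real \<Rightarrow> real measure"
  defines "N' \<equiv> \<lambda>\<theta>. if \<theta> \<in> {0..pi} then N \<theta> else N 0"
  assumes M: "prob_space M" "sets M = sets borel"
    and N: "\<And>\<theta>. \<theta> \<in> {0..pi} \<Longrightarrow> prob_space (N \<theta>) \<and> sets (N \<theta>) = sets borel"
    and mixture: "\<forall>A\<in>sets borel. measure M A = (LINT \<theta>:{0..pi}|lborel. measure (N \<theta>) A) / pi"
  shows "N' \<in> measurable uniform_angle (subprob_algebra borel)" and "M = uniform_angle \<bind> N'"
proof -
  have N': "prob_space (N' \<theta>)" "sets (N' \<theta>) = sets borel" for \<theta>
    using N[of \<theta>] N[of 0] by (auto simp: N'_def)
  have emeasure_N': "emeasure (N' \<theta>) A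
      = ennreal (indicator {0..pi} \<theta> *\<^sub>R measure (N \<theta>) A + (1 - indicator {0..pi} \<theta>) * measure (N 0) A)"
    for \<theta> A
    using N'[of \<theta>] N[of \<theta>] by (auto simp: N'_def indicator_def finite_measure.emeasure_eq_measure prob_space_def)
  show kernel: "N' \<in> measurable uniform_angle (subprob_algebra borel)"
  proof (rule measurable_subprob_algebra)
    fix A :: "real set" assume "A \<in> sets borel"
    then have "(\<lambda>\<theta>. indicator {0..pi} \<theta> *\<^sub>R measure (N \<theta>) A) \<in> borel_measurable borel"
      using mixture_set_integrable[OF M N mixture] unfolding set_integrable_def
      by (auto dest: borel_measurable_integrable)
    then show "(\<lambda>\<theta>. emeasure (N' \<theta>) A) \<in> borel_measurable uniform_angle"
      unfolding emeasure_N' by measurable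
  qed (use N' prob_space_imp_subprob_space in auto)
  show "M = uniform_angle \<bind> N'"
  proof (rule measure_eqI)
    show "sets M = sets (uniform_angle \<bind> N')"
      using M N' sets_bind[of uniform_angle N' borel] by (simp add: uniform_angle_def)
    fix A assume "A \<in> sets M"
    then have A: "A \<in> sets borel" using M by simp
    have [measurable]: "(\<lambda>\<theta>. emeasure (N' \<theta>) A) \<in> borel_measurable borel"
      using measurable_compose[OF kernel measurable_emeasure_subprob_algebra[OF A]] by simp
    have "emeasure (uniform_angle \<bind> N') A = (\<integral>\<^sup>+\<theta>. emeasure (N' \<theta>) A \<partial>uniform_angle)"
      by (rule emeasure_bind) (use kernel A in \<open>auto simp: uniform_angle_def\<close>)
    also have "\<dots> = (\<integral>\<^sup>+\<theta>. ennreal (indicator {0..pi} \<theta> *\<^sub>R measure (N \<theta>) A / pi) \<partial>lborel)"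
      unfolding nn_integral_uniform_angle[OF \<open>_ \<in> borel_measurable borel\<close>]
      by (intro nn_integral_cong) (auto simp: emeasure_N' indicator_def ennreal_mult'[symmetric])
    also have "\<dots> = ennreal (measure M A)"
      using mixture_set_integrable[OF M N mixture A] mixture A
      by (subst nn_integral_eq_integral) (auto simp: set_integrable_def set_lebesgue_integral_def)
    finally show "emeasure M A = emeasure (uniform_angle \<bind> N') A"
      using M by (simp add: finite_measure.emeasure_eq_measure prob_space_def)
  qed
qed

lemma nn_integral_mixture:
  fixes M :: "real measure" and N :: "real \<Rightarrow> real measure" and g :: "real \<Rightarrow> ennreal"
  assumes M: "prob_space M" "sets M = sets borel"
    and N: "\<And>\<theta>. \<theta> \<in> {0..pi} \<Longrightarrow> prob_space (N \<theta>) \<and> sets (N \<theta>) = sets borel"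
    and mixture: "\<forall>A\<in>sets borel. measure M A = (LINT \<theta>:{0..pi}|lborel. measure (N \<theta>) A) / pi"
    and [measurable]: "g \<in> borel_measurable borel"
  shows "(\<integral>\<^sup>+x. g x \<partial>M) = (\<integral>\<^sup>+\<theta>. ennreal (indicator {0..pi} \<theta> / pi) * (\<integral>\<^sup>+x. g x \<partial>N \<theta>) \<partial>lborel)"
proof -
  define N' where "N' \<theta> = (if \<theta> \<in> {0..pi} then N \<theta> else N 0)" for \<theta>
  have kernel: "N' \<in> measurable uniform_angle (subprob_algebra borel)"
    using mixture_eq_bind(1)[OF M N mixture] by (simp add: N'_def[abs_def])
  have [measurable]: "(\<lambda>\<theta>. \<integral>\<^sup>+x. g x \<partial>N' \<theta>) \<in> borel_measurable borel"
    using measurable_compose[OF kernel nn_integral_measurable_subprob_algebra[of g borel]] by simp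
  have "(\<integral>\<^sup>+x. g x \<partial>M) = (\<integral>\<^sup>+x. g x \<partial>(uniform_angle \<bind> N'))"
    using mixture_eq_bind(2)[OF M N mixture] by (simp add: N'_def[abs_def])
  also have "\<dots> = (\<integral>\<^sup>+\<theta>. \<integral>\<^sup>+x. g x \<partial>N' \<theta> \<partial>uniform_angle)"
    by (rule nn_integral_bind[OF _ kernel]) simp
  also have "\<dots> = (\<integral>\<^sup>+\<theta>. ennreal (indicator {0..pi} \<theta> / pi) * (\<integral>\<^sup>+x. g x \<partial>N' \<theta>) \<partial>lborel)"
    by (rule nn_integral_uniform_angle) measurable
  also have "\<dots> = (\<integral>\<^sup>+\<theta>. ennreal (indicator {0..pi} \<theta> / pi) * (\<integral>\<^sup>+x. g x \<partial>N \<theta>) \<partial>lborel)"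
    by (auto intro!: nn_integral_cong simp: N'_def indicator_def)
  finally show ?thesis .
qed

lemma half_versine_powr_eq:
  fixes \<theta> :: real
  assumes "0 < \<theta>" "\<theta> < pi"
  shows "((1 - cos \<theta>) / 2) powr (-1/2) * ((1 + cos \<theta>) / 2) powr (-1/2) = 2 / sin \<theta>"
proof -
  have sin: "sin \<theta> > 0" using sin_gt_zero[OF assms] .
  have "(1 - cos \<theta>) / 2 * ((1 + cos \<theta>) / 2) = (1 - cos \<theta> ^ 2) / 4"
    by (simp add: field_simps power2_eq_square)
  also have "\<dots> = (sin \<theta> / 2) ^ 2"
    by (simp add: sin_squared_eq power_divide)
  finally have "(1 - cos \<theta>) / 2 * ((1 + cos \<theta>) / 2) = (sin \<theta> / 2) ^ 2" .
  then have "((1 - cos \<theta>) / 2) powr (-1/2) * ((1 + cos \<theta>) / 2) powr (-1/2) = ((sin \<theta> / 2) ^ 2) powr (-1/2)"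
    by (simp only: powr_mult[symmetric])
  also have "\<dots> = 1 / sqrt ((sin \<theta> / 2) ^ 2)"
    by (simp add: powr_minus_divide powr_half_sqrt)
  also have "\<dots> = 2 / sin \<theta>" using sin by simp
  finally show ?thesis .
qed

text \<open>The substitution \<open>t = (1 + cos \<theta>) / 2\<close> is done as \<open>u = (1 - cos \<theta>) / 2\<close>, which is
  increasing, followed by the reflection \<open>t = 1 - u\<close>.\<close>
lemma nn_integral_cos_substitution:
  fixes h :: "real \<Rightarrow> real"
  assumes [measurable]: "h \<in> borel_measurable borel"
  shows "(\<integral>\<^sup>+\<theta>. ennreal (indicator {0..pi} \<theta> * h (1 + cos \<theta>)) \<partial>lborel)
       = (\<integral>\<^sup>+t. ennreal (indicator {0..1} t * (h (2 * t) * t powr (-1/2) * (1 - t) powr (-1/2))) \<partial>lborel)"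
proof -
  define f where "f u = h (2 * (1 - u)) * u powr (-1/2) * (1 - u) powr (-1/2)" for u :: real
  define g where "g \<theta> = (1 - cos \<theta>) / 2" for \<theta> :: real
  have [measurable]: "f \<in> borel_measurable borel" unfolding f_def by measurable
  have "(\<integral>\<^sup>+u. ennreal (f u * indicator {g 0..g pi} u) \<partial>lborel)
      = (\<integral>\<^sup>+\<theta>. ennreal (f (g \<theta>) * (sin \<theta> / 2) * indicator {0..pi} \<theta>) \<partial>lborel)"
  proof (rule nn_integral_substitution)
    show "set_borel_measurable borel {g 0..g pi} f" unfolding set_borel_measurable_def by measurable
    show "(g has_real_derivative sin x / 2) (at x)" for x
      unfolding g_def by (auto intro!: derivative_eq_intros)
    show "continuous_on {0..pi} (\<lambda>x. sin x / 2)" by (intro continuous_intros) auto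
    show "0 \<le> sin x / 2" if "x \<in> {0..pi}" for x using that sin_ge_zero by auto
  qed simp
  also have "\<dots> = (\<integral>\<^sup>+\<theta>. ennreal (indicator {0..pi} \<theta> * h (1 + cos \<theta>)) \<partial>lborel)"
  proof (rule nn_integral_cong_AE)
    have "AE \<theta> in lborel. \<theta> \<noteq> 0 \<and> \<theta> \<noteq> pi"
      using AE_lborel_singleton[of 0] AE_lborel_singleton[of pi] by eventually_elim auto
    then show "AE \<theta> in lborel. ennreal (f (g \<theta>) * (sin \<theta> / 2) * indicator {0..pi} \<theta>)
                              = ennreal (indicator {0..pi} \<theta> * h (1 + cos \<theta>))"
    proof eventually_elim
      case (elim \<theta>)
      show ?case
      proof (cases "\<theta> \<in> {0..pi}")
        case True
        then have \<theta>: "0 < \<theta>" "\<theta> < pi" using elim by auto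
        have one_minus_g: "1 - g \<theta> = (1 + cos \<theta>) / 2" by (simp add: g_def field_simps)
        have "f (g \<theta>) = h (1 + cos \<theta>) * (g \<theta> powr (-1/2) * (1 - g \<theta>) powr (-1/2))"
        proof -
          have "2 * (1 - g \<theta>) = 1 + cos \<theta>" by (simp add: g_def field_simps)
          then show ?thesis unfolding f_def by (simp only: mult.assoc)
        qed
        also have "g \<theta> powr (-1/2) * (1 - g \<theta>) powr (-1/2) = 2 / sin \<theta>"
          using half_versine_powr_eq[OF \<theta>] unfolding one_minus_g by (simp add: g_def)
        finally have "f (g \<theta>) * (sin \<theta> / 2) = h (1 + cos \<theta>)"
          using sin_gt_zero[OF \<theta>] by simp
        then show ?thesis using True by simp
      qed simp
    qed
  qed
  finally have "(\<integral>\<^sup>+\<theta>. ennreal (indicator {0..pi} \<theta> * h (1 + cos \<theta>)) \<partial>lborel)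
              = (\<integral>\<^sup>+u. ennreal (f u * indicator {0..1} u) \<partial>lborel)"
    by (simp add: g_def)
  also have "\<dots> = ennreal \<bar>- 1\<bar> * (\<integral>\<^sup>+t. ennreal (f (1 + (- 1) * t) * indicator {0..1} (1 + (- 1) * t)) \<partial>lborel)"
    by (rule nn_integral_real_affine) auto
  also have "\<dots> = (\<integral>\<^sup>+t. ennreal (indicator {0..1} t * (h (2 * t) * t powr (-1/2) * (1 - t) powr (-1/2))) \<partial>lborel)"
    by (auto intro!: nn_integral_cong simp: f_def indicator_def mult_ac)
  finally show ?thesis .
qed

lemma nb_weight_binomial_expansion:
  fixes K \<Delta> m \<mu> \<theta> :: real and i :: nat
  assumes K: "K > 0" and \<Delta>: "0 \<le> \<Delta>" "\<Delta> < 1" and m: "m > 0" and \<mu>: "\<mu> > 0"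
  shows "nb_weight (K * (1 + \<Delta> * cos \<theta>)) \<mu> m i =
    (\<Sum>q\<le>i. (Gamma (m + real i) * (\<mu> * K) ^ i * m powr m / (Gamma m * Gamma (real i + 1)) *
               (real (i choose q) * \<Delta> ^ q * (1 - \<Delta>) ^ (i - q))) *
             ((1 + cos \<theta>) ^ q * (\<mu> * K * (1 - \<Delta>) + m + \<mu> * K * \<Delta> * (1 + cos \<theta>)) powr (- (m + real i))))"
proof -
  define \<kappa> where "\<kappa> = K * (1 + \<Delta> * cos \<theta>)"
  define S where "S = m + \<mu> * \<kappa>"
  define C where "C = Gamma (m + real i) * (\<mu> * K) ^ i * m powr m / (Gamma m * Gamma (real i + 1))"
  have "\<Delta> * cos \<theta> \<ge> - \<Delta>" using mult_left_mono[OF cos_ge_minus_one[of \<theta>] \<Delta>(1)] by simp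
  then have "\<kappa> > 0" using K \<Delta>(2) by (simp add: \<kappa>_def)
  then have S: "S > 0" using m \<mu> by (simp add: S_def add_pos_pos)
  have "m \<notin> \<int>\<^sub>\<le>\<^sub>0" using m by (auto elim!: nonpos_Ints_cases)
  moreover have "Gamma (1 + real i) = fact i" by (rule Gamma_fact)
  ultimately have poch: "pochhammer m i / fact i = Gamma (m + real i) / (Gamma m * Gamma (real i + 1))"
    using pochhammer_Gamma[of m i] by (simp add: add.commute)
  have "nb_weight \<kappa> \<mu> m i = m powr m / S powr m * (pochhammer m i / fact i) * ((\<mu> * \<kappa>) ^ i / S powr real i)"
    using S m by (simp add: nb_weight_def S_def[symmetric] powr_divide power_divide powr_realpow)
  also have "\<dots> = m powr m * (pochhammer m i / fact i) * (\<mu> * \<kappa>) ^ i * S powr (- (m + real i))"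
  proof -
    have "S powr (- (m + real i)) = inverse (S powr m) * inverse (S powr real i)"
      by (simp only: minus_add_distrib powr_add powr_minus)
    then show ?thesis by (simp add: divide_inverse mult_ac)
  qed
  also have "(\<mu> * \<kappa>) ^ i = (\<mu> * K) ^ i * (\<Delta> * (1 + cos \<theta>) + (1 - \<Delta>)) ^ i"
    by (simp add: \<kappa>_def algebra_simps flip: power_mult_distrib)
  also have "(\<Delta> * (1 + cos \<theta>) + (1 - \<Delta>)) ^ i
           = (\<Sum>q\<le>i. real (i choose q) * (\<Delta> * (1 + cos \<theta>)) ^ q * (1 - \<Delta>) ^ (i - q))"
    by (rule binomial_ring)
  also have "S = \<mu> * K * (1 - \<Delta>) + m + \<mu> * K * \<Delta> * (1 + cos \<theta>)"
    by (simp add: S_def \<kappa>_def algebra_simps)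
  finally show ?thesis
    unfolding poch \<kappa>_def
    by (simp add: sum_distrib_left sum_distrib_right power_mult_distrib mult_ac)
qed

lemma nn_integral_cos_power_finite:
  fixes D B e :: real and q :: nat
  assumes D: "D > 0" and B: "B \<ge> 0" and e: "e > 0"
  shows "(\<integral>\<^sup>+\<theta>. ennreal (indicator {0..pi} \<theta> * ((1 + cos \<theta>) ^ q * (D + B * (1 + cos \<theta>)) powr (- e))) \<partial>lborel)
         < \<infinity>"
proof -
  have "(\<integral>\<^sup>+\<theta>. ennreal (indicator {0..pi} \<theta> * ((1 + cos \<theta>) ^ q * (D + B * (1 + cos \<theta>)) powr (- e))) \<partial>lborel)
      \<le> (\<integral>\<^sup>+\<theta>. ennreal (2 ^ q * D powr (- e)) * indicator {0..pi} \<theta> \<partial>lborel)"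
  proof (intro nn_integral_mono)
    fix \<theta> :: real
    have "0 \<le> 1 + cos \<theta>" "1 + cos \<theta> \<le> 2" using cos_ge_minus_one[of \<theta>] cos_le_one[of \<theta>] by linarith+
    then have "(1 + cos \<theta>) ^ q * (D + B * (1 + cos \<theta>)) powr (- e) \<le> 2 ^ q * D powr (- e)"
      using D B e by (intro mult_mono power_mono powr_mono2') auto
    then show "ennreal (indicator {0..pi} \<theta> * ((1 + cos \<theta>) ^ q * (D + B * (1 + cos \<theta>)) powr (- e)))
             \<le> ennreal (2 ^ q * D powr (- e)) * indicator {0..pi} \<theta>"
      by (auto simp: indicator_def)
  qed
  also have "\<dots> < \<infinity>" by (simp add: nn_integral_cmult_indicator ennreal_mult_less_top)
  finally show ?thesis .
qed

text \<open>The exponents are written as \<open>b - 1\<close> and \<open>c - b - 1\<close> with \<open>b = q + 1/2\<close>, \<open>c = q + 1\<close>,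
  the shape of Euler's integral in \<open>hyp2F1_def\<close>.\<close>
lemma nn_integral_cos_power_eq_euler:
  fixes D B e :: real and q :: nat
  assumes D: "D > 0" and B: "B \<ge> 0"
  shows "(\<integral>\<^sup>+\<theta>. ennreal (indicator {0..pi} \<theta> * ((1 + cos \<theta>) ^ q * (D + B * (1 + cos \<theta>)) powr (- e))) \<partial>lborel)
       = ennreal (2 ^ q * D powr (- e)) *
         (\<integral>\<^sup>+t. ennreal (indicator {0<..<1} t * (t powr (real q + 1/2 - 1) * (1 - t) powr (real q + 1 - (real q + 1/2) - 1) *
                                                (1 - (- 2 * B / D) * t) powr (- e))) \<partial>lborel)"
proof -
  define z where "z = - 2 * B / D"
  define h where "h u = u ^ q * (D + B * u) powr (- e)" for u :: real
  define E where "E t = t powr (real q + 1/2 - 1) * (1 - t) powr (real q + 1 - (real q + 1/2) - 1) *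
                         (1 - z * t) powr (- e)" for t :: real
  have c: "2 ^ q * D powr (- e) > 0" using D by simp
  have "(\<integral>\<^sup>+\<theta>. ennreal (indicator {0..pi} \<theta> * h (1 + cos \<theta>)) \<partial>lborel)
      = (\<integral>\<^sup>+t. ennreal (indicator {0..1} t * (h (2 * t) * t powr (-1/2) * (1 - t) powr (-1/2))) \<partial>lborel)"
    by (rule nn_integral_cos_substitution) (simp add: h_def)
  also have "\<dots> = (\<integral>\<^sup>+t. ennreal (2 ^ q * D powr (- e)) * ennreal (indicator {0<..<1} t * E t) \<partial>lborel)"
  proof (intro nn_integral_cong)
    fix t :: real
    show "ennreal (indicator {0..1} t * (h (2 * t) * t powr (-1/2) * (1 - t) powr (-1/2)))
        = ennreal (2 ^ q * D powr (- e)) * ennreal (indicator {0<..<1} t * E t)"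
    proof (cases "0 < t \<and> t < 1")
      case True
      have "D + B * (2 * t) = D * (1 - z * t)" using D by (simp add: z_def field_simps)
      moreover have "1 - z * t > 0" using True B D by (simp add: z_def add_pos_nonneg)
      moreover have "t ^ q * t powr (-1/2) = t powr (real q + 1/2 - 1)"
        using True by (simp add: powr_realpow[symmetric] powr_add[symmetric])
      ultimately have "h (2 * t) * t powr (-1/2) * (1 - t) powr (-1/2) = 2 ^ q * D powr (- e) * E t"
        unfolding h_def E_def by (simp add: powr_mult power_mult_distrib mult_ac)
      then show ?thesis using True c by (simp add: ennreal_mult'[symmetric] E_def)
    qed (auto simp: indicator_def)
  qed
  also have "\<dots> = ennreal (2 ^ q * D powr (- e)) * (\<integral>\<^sup>+t. ennreal (indicator {0<..<1} t * E t) \<partial>lborel)"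
    by (rule nn_integral_cmult) (simp add: E_def)
  finally show ?thesis unfolding h_def E_def z_def .
qed

lemma nn_integral_cos_power_eq_hyp2F1:
  fixes D B e :: real and q :: nat
  assumes D: "D > 0" and B: "B \<ge> 0" and e: "e > 0"
  shows "(\<integral>\<^sup>+\<theta>. ennreal (indicator {0..pi} \<theta> * ((1 + cos \<theta>) ^ q * (D + B * (1 + cos \<theta>)) powr (- e))) \<partial>lborel)
       = ennreal (2 ^ q * D powr (- e) * sqrt pi * Gamma (real q + 1/2) / Gamma (real q + 1) *
                  hyp2F1 e (real q + 1/2) (real q + 1) (- 2 * B / D))"
    (is "?I = _")
proof -
  define E where "E t = t powr (real q + 1/2 - 1) * (1 - t) powr (real q + 1 - (real q + 1/2) - 1) *
                         (1 - (- 2 * B / D) * t) powr (- e)" for t :: real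
  have c: "2 ^ q * D powr (- e) > 0" using D by simp
  note I = nn_integral_cos_power_eq_euler[OF D B, of q e, folded E_def]
  have "(\<integral>\<^sup>+t. ennreal (indicator {0<..<1} t * E t) \<partial>lborel) = ennreal (LINT t:{0<..<1}|lborel. E t)"
    using nn_integral_cos_power_finite[OF D B e, of q] c unfolding I set_lebesgue_integral_def
    by (subst integral_eq_nn_integral) (auto simp: E_def ennreal_mult_less_top ennreal_enn2real_if)
  then have "?I = ennreal (2 ^ q * D powr (- e) * (LINT t:{0<..<1}|lborel. E t))"
    unfolding I using c by (simp add: ennreal_mult')
  also have "2 ^ q * D powr (- e) * (LINT t:{0<..<1}|lborel. E t)
           = 2 ^ q * D powr (- e) * sqrt pi * Gamma (real q + 1/2) / Gamma (real q + 1) *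
             hyp2F1 e (real q + 1/2) (real q + 1) (- 2 * B / D)"
  proof -
    have "Gamma (real q + 1/2) \<noteq> 0" "Gamma (real q + 1) \<noteq> 0"
      by (simp_all add: Gamma_real_pos less_imp_neq[symmetric] add_pos_nonneg)
    moreover have "hyp2F1 e (real q + 1/2) (real q + 1) (- 2 * B / D)
                 = Gamma (real q + 1) / (Gamma (real q + 1/2) * sqrt pi) * (LINT t:{0<..<1}|lborel. E t)"
      by (simp add: hyp2F1_def E_def Gamma_one_half_real)
    ultimately show ?thesis by (simp add: field_simps)
  qed
  finally show ?thesis .
qed

lemma hyp2F1_nonneg:
  assumes "b > 0" "c > b"
  shows "hyp2F1 a b c z \<ge> 0"
  unfolding hyp2F1_def set_lebesgue_integral_def using assms
  by (intro mult_nonneg_nonneg divide_nonneg_nonneg integral_nonneg_AE) (auto simp: Gamma_real_pos less_imp_le)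

lemma mftr_w_nonneg:
  assumes "K > 0" "0 \<le> \<Delta>" "\<Delta> < 1" "m > 0" "\<mu> > 0"
  shows "mftr_w K \<Delta> m \<mu> i \<ge> 0"
  unfolding mftr_w_def using assms
  by (intro mult_nonneg_nonneg divide_nonneg_nonneg sum_nonneg hyp2F1_nonneg)
     (auto simp: Gamma_real_pos less_imp_le add_pos_nonneg)

lemma mftr_w_eq_sum:
  fixes K \<Delta> m \<mu> :: real and i :: nat
  defines "C \<equiv> Gamma (m + real i) * (\<mu> * K) ^ i * m powr m / (Gamma m * Gamma (real i + 1))"
    and "D \<equiv> \<mu> * K * (1 - \<Delta>) + m" and "B \<equiv> \<mu> * K * \<Delta>" and "e \<equiv> m + real i"
  assumes \<Delta>: "\<Delta> < 1"
  shows "mftr_w K \<Delta> m \<mu> i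
       = (\<Sum>q\<le>i. C * (real (i choose q) * \<Delta> ^ q * (1 - \<Delta>) ^ (i - q)) / pi *
                 (2 ^ q * D powr (- e) * sqrt pi * Gamma (real q + 1/2) / Gamma (real q + 1) *
                  hyp2F1 e (real q + 1/2) (real q + 1) (- 2 * B / D)))"
  unfolding mftr_w_def atLeast0AtMost sum_distrib_left
proof (intro sum.cong refl, goal_cases)
  case (1 q)
  define P where "P = C * real (i choose q) * Gamma (real q + 1/2) / Gamma (real q + 1) *
                      hyp2F1 e (real q + 1/2) (real q + 1) (- 2 * B / D)"
  have "(1 - \<Delta>) ^ i = (1 - \<Delta>) ^ (i - q) * (1 - \<Delta>) ^ q"
    using 1 by (simp flip: power_add)
  then have binomial: "(1 - \<Delta>) ^ i * (2 * \<Delta> / (1 - \<Delta>)) ^ q = \<Delta> ^ q * (1 - \<Delta>) ^ (i - q) * 2 ^ q"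
    using \<Delta> by (simp add: power_divide power_mult_distrib field_simps)
  have "sqrt pi / pi = sqrt pi / (sqrt pi * sqrt pi)" by simp
  also have "\<dots> = 1 / sqrt pi" by (rule nonzero_divide_mult_cancel_left) simp
  finally have normalization: "D powr (- e) * sqrt pi / pi = 1 / (sqrt pi * D powr e)"
    unfolding times_divide_eq_right[symmetric] by (simp add: powr_minus_divide)
  have "Gamma (m + real i) * (\<mu> * K) ^ i * m powr m / (Gamma m * Gamma (real i + 1)) *
        ((1 - \<Delta>) ^ i / (sqrt pi * (\<mu> * K * (1 - \<Delta>) + m) powr (m + real i))) *
        (real (i choose q) * Gamma (real q + 1/2) / Gamma (real q + 1) * (2 * \<Delta> / (1 - \<Delta>)) ^ q *
         hyp2F1 (m + real i) (real q + 1/2) (real q + 1) (- 2 * \<mu> * K * \<Delta> / (\<mu> * K * (1 - \<Delta>) + m)))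
      = P * ((1 - \<Delta>) ^ i * (2 * \<Delta> / (1 - \<Delta>)) ^ q) * (1 / (sqrt pi * D powr e))"
    by (simp add: P_def C_def D_def B_def e_def mult_ac)
  also have "\<dots> = P * (\<Delta> ^ q * (1 - \<Delta>) ^ (i - q) * 2 ^ q) * (D powr (- e) * sqrt pi / pi)"
    unfolding binomial normalization ..
  also have "\<dots> = C * (real (i choose q) * \<Delta> ^ q * (1 - \<Delta>) ^ (i - q)) / pi *
                 (2 ^ q * D powr (- e) * sqrt pi * Gamma (real q + 1/2) / Gamma (real q + 1) *
                  hyp2F1 e (real q + 1/2) (real q + 1) (- 2 * B / D))"
    by (simp add: P_def mult_ac)
  finally show ?case .
qed

lemma nn_integral_average_nb_weight:
  fixes K \<Delta> m \<mu> :: real and i :: nat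
  assumes K: "K > 0" and \<Delta>: "0 \<le> \<Delta>" "\<Delta> < 1" and m: "m > 0" and \<mu>: "\<mu> > 0"
  shows "(\<integral>\<^sup>+\<theta>. ennreal (indicator {0..pi} \<theta> / pi) * ennreal (nb_weight (K * (1 + \<Delta> * cos \<theta>)) \<mu> m i) \<partial>lborel)
       = ennreal (mftr_w K \<Delta> m \<mu> i)"
proof -
  define D where "D = \<mu> * K * (1 - \<Delta>) + m"
  define B where "B = \<mu> * K * \<Delta>"
  define e where "e = m + real i"
  define c where "c q = Gamma (m + real i) * (\<mu> * K) ^ i * m powr m / (Gamma m * Gamma (real i + 1)) *
                        (real (i choose q) * \<Delta> ^ q * (1 - \<Delta>) ^ (i - q))" for q
  define h where "h q u = u ^ q * (D + B * u) powr (- e)" for q :: nat and u :: real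
  define F where "F q = 2 ^ q * D powr (- e) * sqrt pi * Gamma (real q + 1/2) / Gamma (real q + 1) *
                         hyp2F1 e (real q + 1/2) (real q + 1) (- 2 * B / D)" for q :: nat
  have D: "D > 0" using \<mu> K \<Delta> m by (simp add: D_def add_pos_nonneg)
  have B: "B \<ge> 0" using \<mu> K \<Delta> by (simp add: B_def)
  have c: "c q \<ge> 0" for q
    using m \<mu> K \<Delta> by (simp add: c_def Gamma_real_pos less_imp_le)
  have F: "F q \<ge> 0" for q
    using D m by (simp add: F_def e_def Gamma_real_pos less_imp_le hyp2F1_nonneg)
  have h: "h q (1 + cos \<theta>) \<ge> 0" for q \<theta>
  proof -
    have "0 \<le> 1 + cos \<theta>" using cos_ge_minus_one[of \<theta>] by linarith
    then show ?thesis by (simp add: h_def)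
  qed
  have "(\<integral>\<^sup>+\<theta>. ennreal (indicator {0..pi} \<theta> / pi) * ennreal (nb_weight (K * (1 + \<Delta> * cos \<theta>)) \<mu> m i) \<partial>lborel)
      = (\<integral>\<^sup>+\<theta>. (\<Sum>q\<le>i. ennreal (c q / pi) * ennreal (indicator {0..pi} \<theta> * h q (1 + cos \<theta>))) \<partial>lborel)"
  proof (intro nn_integral_cong)
    fix \<theta> :: real
    have "nb_weight (K * (1 + \<Delta> * cos \<theta>)) \<mu> m i = (\<Sum>q\<le>i. c q * h q (1 + cos \<theta>))"
      unfolding nb_weight_binomial_expansion[OF K \<Delta> m \<mu>] c_def h_def D_def B_def e_def
      by (simp add: mult_ac)
    then show "ennreal (indicator {0..pi} \<theta> / pi) * ennreal (nb_weight (K * (1 + \<Delta> * cos \<theta>)) \<mu> m i)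
        = (\<Sum>q\<le>i. ennreal (c q / pi) * ennreal (indicator {0..pi} \<theta> * h q (1 + cos \<theta>)))"
      using c h by (simp add: sum_distrib_left mult_ac ennreal_mult'[symmetric] flip: sum_ennreal)
  qed
  also have "\<dots> = (\<Sum>q\<le>i. ennreal (c q / pi) * (\<integral>\<^sup>+\<theta>. ennreal (indicator {0..pi} \<theta> * h q (1 + cos \<theta>)) \<partial>lborel))"
    by (subst nn_integral_sum) (auto simp: h_def nn_integral_cmult)
  also have "\<dots> = (\<Sum>q\<le>i. ennreal (c q / pi * F q))"
  proof (intro sum.cong refl)
    fix q
    have "(\<integral>\<^sup>+\<theta>. ennreal (indicator {0..pi} \<theta> * h q (1 + cos \<theta>)) \<partial>lborel) = ennreal (F q)"
      unfolding h_def F_def using D B m by (intro nn_integral_cos_power_eq_hyp2F1) (simp_all add: e_def)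
    then show "ennreal (c q / pi) * (\<integral>\<^sup>+\<theta>. ennreal (indicator {0..pi} \<theta> * h q (1 + cos \<theta>)) \<partial>lborel)
             = ennreal (c q / pi * F q)"
      using c[of q] by (simp add: ennreal_mult'[symmetric])
  qed
  also have "\<dots> = ennreal (\<Sum>q\<le>i. c q / pi * F q)"
    using c F by (intro sum_ennreal) simp
  also have "(\<Sum>q\<le>i. c q / pi * F q) = mftr_w K \<Delta> m \<mu> i"
    unfolding mftr_w_eq_sum[OF \<Delta>(2)] c_def F_def D_def B_def e_def by (simp add: mult.assoc)
  finally show ?thesis .
qed

lemma mftr_conditional_parameters:
  fixes K \<Delta> gb \<theta> :: real
  assumes K: "K > 0" and \<Delta>: "0 \<le> \<Delta>" "\<Delta> < 1" and gb: "gb > 0"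
  shows "K * (1 + \<Delta> * cos \<theta>) > 0" and "gb * (1 + K * (1 + \<Delta> * cos \<theta>)) / (1 + K) > 0"
    and "gb * (1 + K * (1 + \<Delta> * cos \<theta>)) / (1 + K) \<le> 2 * gb"
proof -
  have "- \<Delta> \<le> \<Delta> * cos \<theta>" "\<Delta> * cos \<theta> \<le> \<Delta>"
    using mult_left_mono[OF cos_ge_minus_one[of \<theta>] \<Delta>(1)] mult_left_mono[OF cos_le_one[of \<theta>] \<Delta>(1)] by auto
  then have \<kappa>: "0 < 1 + \<Delta> * cos \<theta>" "1 + \<Delta> * cos \<theta> \<le> 2" using \<Delta> by auto
  then show "K * (1 + \<Delta> * cos \<theta>) > 0" using K by simp
  then show "gb * (1 + K * (1 + \<Delta> * cos \<theta>)) / (1 + K) > 0" using gb K by simp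
  have "K * (1 + \<Delta> * cos \<theta>) \<le> K * 2" using \<kappa> K by (intro mult_left_mono) auto
  then have "gb * (1 + K * (1 + \<Delta> * cos \<theta>)) \<le> gb * (2 * (1 + K))"
    using gb by (intro mult_left_mono) auto
  then show "gb * (1 + K * (1 + \<Delta> * cos \<theta>)) / (1 + K) \<le> 2 * gb"
    using K by (simp add: divide_le_eq mult_ac)
qed

lemma nn_integral_ln_mftr_law_mixture:
  fixes K \<Delta> m \<mu> gb :: real and M :: "real measure"
  assumes law: "is_mftr_law K \<Delta> m \<mu> gb M"
  obtains N where
    "\<And>\<theta>. \<theta> \<in> {0..pi} \<Longrightarrow>
       is_kms_law (K * (1 + \<Delta> * cos \<theta>)) \<mu> m (gb * (1 + K * (1 + \<Delta> * cos \<theta>)) / (1 + K)) (N \<theta>)"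
    and "(\<integral>\<^sup>+x. ennreal (indicator {0<..} x * ln (1 + x)) \<partial>M)
       = (\<integral>\<^sup>+\<theta>. ennreal (indicator {0..pi} \<theta> / pi) *
                 (\<integral>\<^sup>+x. ennreal (indicator {0<..} x * ln (1 + x)) \<partial>N \<theta>) \<partial>lborel)"
proof -
  from law obtain N where
    kms: "\<And>\<theta>. \<theta> \<in> {0..pi} \<Longrightarrow>
            is_kms_law (K * (1 + \<Delta> * cos \<theta>)) \<mu> m (gb * (1 + K * (1 + \<Delta> * cos \<theta>)) / (1 + K)) (N \<theta>)"
    and mixture: "\<forall>A\<in>sets borel. measure M A = (LINT \<theta>:{0..pi}|lborel. measure (N \<theta>) A) / pi"
    and M: "prob_space M" "sets M = sets borel"
    unfolding is_mftr_law_def by blast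
  have "prob_space (N \<theta>) \<and> sets (N \<theta>) = sets borel" if "\<theta> \<in> {0..pi}" for \<theta>
    using kms[OF that] unfolding is_kms_law_def by auto
  from nn_integral_mixture[OF M this mixture] kms show ?thesis
    by (intro that) auto
qed

lemma nn_integral_ln_mftr_law_le:
  fixes K \<Delta> m \<mu> gb :: real and M :: "real measure"
  assumes K: "K > 0" and \<Delta>: "0 \<le> \<Delta>" "\<Delta> < 1" and m: "m > 0" and \<mu>: "\<mu> > 0" and gb: "gb > 0"
    and law: "is_mftr_law K \<Delta> m \<mu> gb M"
  shows "(\<integral>\<^sup>+x. ennreal (indicator {0<..} x * ln (1 + x)) \<partial>M) \<le> ennreal (2 * gb)"
proof -
  obtain N where kms: "\<And>\<theta>. \<theta> \<in> {0..pi} \<Longrightarrow>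
       is_kms_law (K * (1 + \<Delta> * cos \<theta>)) \<mu> m (gb * (1 + K * (1 + \<Delta> * cos \<theta>)) / (1 + K)) (N \<theta>)"
    and average: "(\<integral>\<^sup>+x. ennreal (indicator {0<..} x * ln (1 + x)) \<partial>M)
       = (\<integral>\<^sup>+\<theta>. ennreal (indicator {0..pi} \<theta> / pi) *
                 (\<integral>\<^sup>+x. ennreal (indicator {0<..} x * ln (1 + x)) \<partial>N \<theta>) \<partial>lborel)"
    using nn_integral_ln_mftr_law_mixture[OF law] by blast
  note parameters = mftr_conditional_parameters[OF K \<Delta> gb]
  have "(\<integral>\<^sup>+x. ennreal (indicator {0<..} x * ln (1 + x)) \<partial>M)
      \<le> (\<integral>\<^sup>+\<theta>. ennreal (2 * gb / pi) * indicator {0..pi} \<theta> \<partial>lborel)"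
    unfolding average
  proof (intro nn_integral_mono)
    fix \<theta> :: real
    show "ennreal (indicator {0..pi} \<theta> / pi) * (\<integral>\<^sup>+x. ennreal (indicator {0<..} x * ln (1 + x)) \<partial>N \<theta>)
        \<le> ennreal (2 * gb / pi) * indicator {0..pi} \<theta>"
    proof (cases "\<theta> \<in> {0..pi}")
      case True
      have "(\<integral>\<^sup>+x. ennreal (indicator {0<..} x * ln (1 + x)) \<partial>N \<theta>)
          \<le> ennreal (gb * (1 + K * (1 + \<Delta> * cos \<theta>)) / (1 + K))"
        by (rule nn_integral_ln_kms_law_le[OF less_imp_le[OF parameters(1)] \<mu> m parameters(2) kms[OF True]])
      also have "\<dots> \<le> ennreal (2 * gb)" using parameters(3) by (rule ennreal_leI)
      finally have "ennreal (1 / pi) * (\<integral>\<^sup>+x. ennreal (indicator {0<..} x * ln (1 + x)) \<partial>N \<theta>)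
                  \<le> ennreal (1 / pi) * ennreal (2 * gb)"
        by (rule mult_left_mono) simp
      then show ?thesis using True gb by (simp add: ennreal_mult'[symmetric])
    qed simp
  qed
  also have "\<dots> = ennreal (2 * gb / pi * pi)"
    using gb by (simp add: nn_integral_cmult_indicator ennreal_mult'[symmetric])
  finally show ?thesis by simp
qed

lemma nn_integral_ln_mftr_law:
  fixes K \<Delta> m \<mu> gb :: real and M :: "real measure"
  assumes K: "K > 0" and \<Delta>: "0 \<le> \<Delta>" "\<Delta> < 1" and m: "m > 0" and \<mu>: "\<mu> > 0" and gb: "gb > 0"
    and law: "is_mftr_law K \<Delta> m \<mu> gb M"
  shows "(\<integral>\<^sup>+x. ennreal (indicator {0<..} x * ln (1 + x)) \<partial>M)
       = (\<Sum>i. ennreal (mftr_w K \<Delta> m \<mu> i) *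
               ln1p_laplace (\<lambda>s. (1 + gb / (\<mu> * (1 + K)) * s) powr (- (\<mu> + real i))))"
proof -
  define \<kappa> where "\<kappa> \<theta> = K * (1 + \<Delta> * cos \<theta>)" for \<theta>
  define G where "G i = ln1p_laplace (\<lambda>s. (1 + gb / (\<mu> * (1 + K)) * s) powr (- (\<mu> + real i)))" for i
  obtain N where kms: "\<And>\<theta>. \<theta> \<in> {0..pi} \<Longrightarrow> is_kms_law (\<kappa> \<theta>) \<mu> m (gb * (1 + \<kappa> \<theta>) / (1 + K)) (N \<theta>)"
    and average: "(\<integral>\<^sup>+x. ennreal (indicator {0<..} x * ln (1 + x)) \<partial>M)
       = (\<integral>\<^sup>+\<theta>. ennreal (indicator {0..pi} \<theta> / pi) *
                 (\<integral>\<^sup>+x. ennreal (indicator {0<..} x * ln (1 + x)) \<partial>N \<theta>) \<partial>lborel)"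
    using nn_integral_ln_mftr_law_mixture[OF law] unfolding \<kappa>_def by blast
  note parameters = mftr_conditional_parameters[OF K \<Delta> gb, folded \<kappa>_def]
  have scale: "gb * (1 + \<kappa> \<theta>) / (1 + K) / (\<mu> * (1 + \<kappa> \<theta>)) = gb / (\<mu> * (1 + K))" for \<theta>
    using parameters(1)[of \<theta>] K \<mu> by (simp add: divide_simps)
  have "(\<integral>\<^sup>+x. ennreal (indicator {0<..} x * ln (1 + x)) \<partial>M)
      = (\<integral>\<^sup>+\<theta>. (\<Sum>i. ennreal (indicator {0..pi} \<theta> / pi) * ennreal (nb_weight (\<kappa> \<theta>) \<mu> m i) * G i) \<partial>lborel)"
    unfolding average
  proof (intro nn_integral_cong)
    fix \<theta> :: real
    show "ennreal (indicator {0..pi} \<theta> / pi) * (\<integral>\<^sup>+x. ennreal (indicator {0<..} x * ln (1 + x)) \<partial>N \<theta>)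
        = (\<Sum>i. ennreal (indicator {0..pi} \<theta> / pi) * ennreal (nb_weight (\<kappa> \<theta>) \<mu> m i) * G i)"
    proof (cases "\<theta> \<in> {0..pi}")
      case True
      have "(\<integral>\<^sup>+x. ennreal (indicator {0<..} x * ln (1 + x)) \<partial>N \<theta>) = (\<Sum>i. ennreal (nb_weight (\<kappa> \<theta>) \<mu> m i) * G i)"
        unfolding G_def scale[of \<theta>, symmetric]
        by (rule nn_integral_ln_kms_law_sums[OF less_imp_le[OF parameters(1)] \<mu> m parameters(2) kms[OF True]])
      then show ?thesis by (simp add: mult.assoc)
    qed simp
  qed
  also have "\<dots> = (\<Sum>i. (\<integral>\<^sup>+\<theta>. ennreal (indicator {0..pi} \<theta> / pi) * ennreal (nb_weight (\<kappa> \<theta>) \<mu> m i) \<partial>lborel) * G i)"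
    by (subst nn_integral_suminf) (auto simp: \<kappa>_def nb_weight_def intro!: suminf_cong nn_integral_multc)
  finally show ?thesis
    unfolding \<kappa>_def nn_integral_average_nb_weight[OF K \<Delta> m \<mu>] G_def .
qed

lemma log2_capacity_integral:
  fixes f :: "real \<Rightarrow> real"
  assumes [measurable]: "f \<in> borel_measurable borel" and f: "\<And>x. 0 \<le> f x"
    and finite: "(\<integral>\<^sup>+x. ennreal (indicator {0<..} x * ln (1 + x)) \<partial>density lborel f) < \<infinity>"
  shows "set_integrable lborel {0<..} (\<lambda>x. log 2 (1 + x) * f x)"
    and "(LINT x:{0<..}|lborel. log 2 (1 + x) * f x)
         = enn2real (\<integral>\<^sup>+x. ennreal (indicator {0<..} x * ln (1 + x)) \<partial>density lborel f) / ln 2"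
proof -
  let ?T = "\<integral>\<^sup>+x. ennreal (indicator {0<..} x * ln (1 + x)) \<partial>density lborel f"
  have nn: "(\<integral>\<^sup>+x. ennreal (indicator {0<..} x *\<^sub>R (log 2 (1 + x) * f x)) \<partial>lborel) = ennreal (1 / ln 2) * ?T"
  proof -
    have "ennreal (1 / ln 2) * ?T
        = (\<integral>\<^sup>+x. ennreal (1 / ln 2) * (ennreal (f x) * ennreal (indicator {0<..} x * ln (1 + x))) \<partial>lborel)"
      by (subst nn_integral_density) (auto simp: nn_integral_cmult)
    also have "\<dots> = (\<integral>\<^sup>+x. ennreal (indicator {0<..} x *\<^sub>R (log 2 (1 + x) * f x)) \<partial>lborel)"
      using f by (intro nn_integral_cong) (auto simp: indicator_def ennreal_mult'[symmetric] log_def mult_ac)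
    finally show ?thesis ..
  qed
  show "set_integrable lborel {0<..} (\<lambda>x. log 2 (1 + x) * f x)"
    unfolding set_integrable_def
  proof (rule integrableI_nonneg)
    show "AE x in lborel. 0 \<le> indicator {0<..} x *\<^sub>R (log 2 (1 + x) * f x)"
      using f by (auto simp: indicator_def)
    show "(\<integral>\<^sup>+x. ennreal (indicator {0<..} x *\<^sub>R (log 2 (1 + x) * f x)) \<partial>lborel) < \<infinity>"
      unfolding nn using finite by (simp add: ennreal_mult_less_top)
  qed simp
  have "(LINT x:{0<..}|lborel. log 2 (1 + x) * f x)
      = enn2real (\<integral>\<^sup>+x. ennreal (indicator {0<..} x *\<^sub>R (log 2 (1 + x) * f x)) \<partial>lborel)"
    unfolding set_lebesgue_integral_def
    using f by (intro integral_eq_nn_integral) (auto simp: indicator_def)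
  then show "(LINT x:{0<..}|lborel. log 2 (1 + x) * f x) = enn2real ?T / ln 2"
    unfolding nn by (simp add: enn2real_mult)
qed

lemma mftr_lambda_div_nu:
  assumes "K \<ge> 0" "\<mu> > 0" "gb > 0"
  shows "mftr_lambda \<mu> i / mftr_nu K \<mu> gb i = \<mu> * (1 + K) / gb"
proof -
  have "\<mu> + real i \<noteq> 0" "gb \<noteq> 0" "1 + K \<noteq> 0" using assms by (auto simp: add_pos_nonneg)
  then show ?thesis by (simp add: mftr_lambda_def mftr_nu_def divide_simps add.commute)
qed

lemma nn_integral_ln_mftr_law_gamma:
  fixes K \<Delta> m \<mu> gb :: real and M :: "real measure"
  defines "z \<equiv> \<mu> * (1 + K) / gb"
  assumes params: "K > 0" "0 \<le> \<Delta>" "\<Delta> < 1" "m > 0" "\<mu> > 0" "gb > 0"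
    and law: "is_mftr_law K \<Delta> m \<mu> gb M"
  shows "(\<integral>\<^sup>+x. ennreal (indicator {0<..} x * ln (1 + x)) \<partial>M)
       = (\<Sum>i. ennreal (mftr_w K \<Delta> m \<mu> i * (z powr mftr_lambda \<mu> i / Gamma (mftr_lambda \<mu> i)) *
                       gamma_ln_moment (mftr_lambda \<mu> i) z))"
proof -
  have z: "z > 0" and lambda: "mftr_lambda \<mu> i > 0" for i
    using params by (simp_all add: z_def mftr_lambda_def add_pos_nonneg)
  have "(\<lambda>s. (1 + gb / (\<mu> * (1 + K)) * s) powr (- (\<mu> + real i))) = (\<lambda>s. (1 + s / z) powr (- mftr_lambda \<mu> i))"
    for i by (simp add: z_def mftr_lambda_def mult.commute)
  then show ?thesis
    unfolding nn_integral_ln_mftr_law[OF params law] using mftr_w_nonneg[OF params(1-5)]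
    by (simp add: ln1p_laplace_gamma_kummerU(1)[OF lambda z] ennreal_mult'[symmetric] mult.assoc)
qed

theorem mainTheorem8:
  fixes K \<Delta> m \<mu> gb :: real and f :: "real \<Rightarrow> real"
  assumes "K > 0" and "0 \<le> \<Delta>" and "\<Delta> < 1" and "m > 0" and "\<mu> > 0" and "gb > 0"
    and "is_mftr_pdf K \<Delta> m \<mu> gb f"
  shows "set_integrable lborel {0<..} (\<lambda>x. log 2 (1 + x) * f x) \<and>
    (\<exists>S :: nat \<Rightarrow> real.
       (\<forall>i. (\<lambda>k. 1 / real (Suc k) * Gamma (real (Suc k) + mftr_lambda \<mu> i) *
                 kummerU (real (Suc k) + mftr_lambda \<mu> i) (1 + mftr_lambda \<mu> i)
                         (mftr_lambda \<mu> i / mftr_nu K \<mu> gb i)) sums S i)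
       \<and> (\<lambda>i. mftr_w K \<Delta> m \<mu> i *
               ((mftr_lambda \<mu> i / mftr_nu K \<mu> gb i) powr mftr_lambda \<mu> i
                 / (Gamma (mftr_lambda \<mu> i) * ln 2)) * S i)
           sums (LINT x:{0<..}|lborel. log 2 (1 + x) * f x))"
proof -
  note params = assms(1-6)
  define z where "z = \<mu> * (1 + K) / gb"
  define T where "T = (\<integral>\<^sup>+x. ennreal (indicator {0<..} x * ln (1 + x)) \<partial>density lborel f)"
  define a where "a i = mftr_w K \<Delta> m \<mu> i * (z powr mftr_lambda \<mu> i / Gamma (mftr_lambda \<mu> i)) *
                        gamma_ln_moment (mftr_lambda \<mu> i) z" for i
  have f: "f \<in> borel_measurable borel" "\<And>x. 0 \<le> f x" and law: "is_mftr_law K \<Delta> m \<mu> gb (density lborel f)"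
    using assms(7) unfolding is_mftr_pdf_def by auto
  have z: "z > 0" and lambda: "mftr_lambda \<mu> i > 0" for i
    using params by (simp_all add: z_def mftr_lambda_def add_pos_nonneg)
  have a: "a i \<ge> 0" for i
    unfolding a_def using mftr_w_nonneg[OF params(1-5)] Gamma_real_pos[OF lambda] z
    by (intro mult_nonneg_nonneg divide_nonneg_nonneg) (auto simp: gamma_ln_moment_nonneg less_imp_le)
  have "T = (\<Sum>i. ennreal (a i))"
    unfolding T_def a_def z_def by (rule nn_integral_ln_mftr_law_gamma[OF params law])
  moreover have "T < \<infinity>"
    unfolding T_def by (rule le_less_trans[OF nn_integral_ln_mftr_law_le[OF params law]]) simp
  ultimately have "(\<lambda>i. a i / ln 2) sums (enn2real T / ln 2)"
    using sums_enn2real_suminf[of "\<lambda>i. ennreal (a i)"] a by (intro sums_divide) simp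
  with log2_capacity_integral[OF f] \<open>T < \<infinity>\<close> show ?thesis
    using ln1p_laplace_gamma_kummerU(2)[OF lambda z] mftr_lambda_div_nu[of K \<mu> gb] params
    unfolding T_def a_def z_def[symmetric]
    by (intro conjI exI[of _ "\<lambda>i. gamma_ln_moment (mftr_lambda \<mu> i) z"]) (auto simp: mult_ac)
qed

end
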